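(* Suppose $\mathcal{Y}=\mathcal{W}^\ast+\mathcal{E}$ with $\mathcal{W}^\ast=\sum_{k=1}^K\mathcal{W}^{\ast(k)}$, where $\bar r_k=\mathrm{rank}(\boldsymbol{W}^{\ast(k)}_{(k)})$, and assume $\|\boldsymbol{W}^{\ast(l)}_{(k)}\|_{S_\infty}\le\alpha$ for all $k\neq l$. Let $(\hat{\mathcal{W}}^{(1)},\dots,\hat{\mathcal{W}}^{(K)})$ be any solution of $$\min_{\mathcal{W}^{(1)},\dots,\mathcal{W}^{(K)}}\ \tfrac12\Bigl\|\mathcal{Y}-\sum_{k=1}^K\mathcal{W}^{(k)}\Bigr\|_F^2+\lambda\sum_{k=1}^K\|\boldsymbol{W}^{(k)}_{(k)}\|_{S_1}\quad\text{s.t. } \|\boldsymbol{W}^{(k)}_{(l)}\|_{S_\infty}\le\alpha\ \ \forall\, l\neq k,$$ and $\hat{\mathcal{W}}=\sum_k\hat{\mathcal{W}}^{(k)}$. If $\lambda\ge 2\|\mathcal{E}\|_{\underline{S_\infty/\infty}}+\alpha(K-1)$, then there is a universal constant $c$ such that $$\sum_{k=1}^K\|\hat{\mathcal{W}}^{(k)}-\mathcal{W}^{\ast(k)}\|_F^2\le c\,\lambda^2\sum_{k=1}^K\bar r_k .$$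
   Context: Tensors are elements of $\mathbb{R}^{n_1\times\cdots\times n_K}$ with $N=\prod_k n_k$; $\|\cdot\|_F$ is the Euclidean norm of the vectorization. For a tensor $\mathcal{W}$, $\boldsymbol{W}_{(k)}\in\mathbb{R}^{n_k\times N/n_k}$ is its mode-$k$ unfolding (columns are the mode-$k$ fibers); for a tensor $\mathcal{W}^{(l)}$, $\boldsymbol{W}^{(l)}_{(k)}$ is its mode-$k$ unfolding. $\|\cdot\|_{S_1}$ is the trace norm and $\|\cdot\|_{S_\infty}$ the spectral norm. $\|\mathcal{E}\|_{\underline{S_\infty/\infty}}=\max_k\|\boldsymbol{E}_{(k)}\|_{S_\infty}$. $\alpha\ge0$, $\lambda>0$. *)

theory Defs
  imports Complex_Main "Jordan_Normal_Form.DL_Rank"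
begin

text \<open>Tensors of order K with mode sizes n 0, ..., n (K-1) (modes are indexed from 0).
  A multi-index is a function nat => nat; a tensor is a real-valued function on multi-indices,
  only its values on tensor_idx K n matter.\<close>

type_synonym tensor = "(nat \<Rightarrow> nat) \<Rightarrow> real"

definition tensor_idx :: "nat \<Rightarrow> (nat \<Rightarrow> nat) \<Rightarrow> (nat \<Rightarrow> nat) set" where
  "tensor_idx K n = {i. (\<forall>k<K. i k < n k) \<and> (\<forall>k\<ge>K. i k = 0)}"

definition frob :: "nat \<Rightarrow> (nat \<Rightarrow> nat) \<Rightarrow> tensor \<Rightarrow> real" where
  "frob K n T = sqrt (\<Sum>i\<in>tensor_idx K n. (T i)\<^sup>2)"

text \<open>Mode-k unfold_mode: row index = i_k, column index j encodes the remaining indices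
  in mixed radix (earlier modes vary fastest), j = sum_{m<>k} i_m * prod_{l<m, l<>k} n_l.\<close>

definition unfold_idx :: "nat \<Rightarrow> (nat \<Rightarrow> nat) \<Rightarrow> nat \<Rightarrow> nat \<Rightarrow> nat \<Rightarrow> (nat \<Rightarrow> nat)" where
  "unfold_idx K n k r j = (\<lambda>m. if m = k then r
      else if m < K then (j div (\<Prod>l\<in>{l. l < m \<and> l \<noteq> k}. n l)) mod n m else 0)"

definition unfold_mode :: "nat \<Rightarrow> (nat \<Rightarrow> nat) \<Rightarrow> tensor \<Rightarrow> nat \<Rightarrow> real mat" where
  "unfold_mode K n T k = mat (n k) (\<Prod>l\<in>{l. l < K \<and> l \<noteq> k}. n l)
      (\<lambda>(r, j). T (unfold_idx K n k r j))"

definition mrank :: "real mat \<Rightarrow> nat" where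
  "mrank A = vec_space.rank (dim_row A) A"

definition spec_norm :: "real mat \<Rightarrow> real" where
  "spec_norm A = Sup {sqrt (\<Sum>i<dim_row A. (\<Sum>j<dim_col A. A $$ (i, j) * x j)\<^sup>2) | x.
                        (\<Sum>j<dim_col A. (x j)\<^sup>2) \<le> 1}"

text \<open>Positive semidefinite square root and trace norm: tr sqrt(A^T A) = sum of singular values.\<close>
definition psd :: "real mat \<Rightarrow> bool" where
  "psd B \<longleftrightarrow> B = transpose_mat B \<and> (\<forall>v \<in> carrier_vec (dim_row B). 0 \<le> v \<bullet> (B *\<^sub>v v))"

definition mtrace :: "real mat \<Rightarrow> real" where
  "mtrace B = (\<Sum>i<dim_row B. B $$ (i, i))"

definition trace_norm :: "real mat \<Rightarrow> real" where
  "trace_norm A = mtrace (THE B. B \<in> carrier_mat (dim_col A) (dim_col A) \<and> psd B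
                               \<and> B * B = transpose_mat A * A)"

end

theory Submission
  imports Defs "Jordan_Normal_Form.Char_Poly"
begin

text \<open>Write \<open>D\<^sub>k = What\<^sub>k - Wstar\<^sub>k\<close> and let \<open>\<parallel>\<cdot>\<parallel>\<^sub>*\<close> be the trace norm of the mode-\<open>k\<close>
  unfolding. Testing the optimality of \<open>What\<close> against the feasible point \<open>Wstar\<close> gives
  \<open>\<parallel>\<Sum>\<^sub>k D\<^sub>k\<parallel>\<^sup>2/2 \<le> \<langle>E, \<Sum>\<^sub>k D\<^sub>k\<rangle> + \<lambda> \<Sum>\<^sub>k (\<parallel>Wstar\<^sub>k\<parallel>\<^sub>* - \<parallel>What\<^sub>k\<parallel>\<^sub>*)\<close>.
  Reading \<open>\<langle>E, D\<^sub>k\<rangle>\<close> in the mode-\<open>k\<close> unfolding, H\<ouml>lder's inequality bounds it by the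
  mode-\<open>k\<close> spectral norm of \<open>E\<close> times \<open>\<parallel>D\<^sub>k\<parallel>\<^sub>*\<close>, and since
  both \<open>What\<^sub>l\<close> and \<open>Wstar\<^sub>l\<close> have mode-\<open>k\<close> spectral norm at most \<open>\<alpha>\<close>, each cross term
  \<open>\<langle>D\<^sub>k, D\<^sub>l\<rangle>\<close> is at least \<open>-2\<alpha> \<parallel>D\<^sub>k\<parallel>\<^sub>*\<close>. The choice of \<open>\<lambda>\<close> absorbs both, leaving
  \<open>\<Sum>\<^sub>k \<parallel>D\<^sub>k\<parallel>\<^sup>2/2 \<le> \<lambda> \<Sum>\<^sub>k (\<parallel>D\<^sub>k\<parallel>\<^sub>* + \<parallel>Wstar\<^sub>k\<parallel>\<^sub>* - \<parallel>What\<^sub>k\<parallel>\<^sub>*)\<close>. Decomposability of the trace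
  norm along the row and column spaces of \<open>Wstar\<^sub>k\<close> bounds each summand by
  \<open>\<parallel>D\<^sub>k\<parallel>\<^sup>2/4 + 9\<lambda>\<^sup>2 rank\<close>, which gives the claim with \<open>c = 36\<close>.\<close>

section \<open>Coordinate vectors\<close>

definition vinner :: "nat \<Rightarrow> (nat \<Rightarrow> real) \<Rightarrow> (nat \<Rightarrow> real) \<Rightarrow> real" where
  "vinner n x y = (\<Sum>i<n. x i * y i)"

definition orthonormal :: "nat \<Rightarrow> nat \<Rightarrow> (nat \<Rightarrow> nat \<Rightarrow> real) \<Rightarrow> bool" where
  "orthonormal n p v \<longleftrightarrow> (\<forall>i<p. \<forall>j<p. vinner n (v i) (v j) = (if i = j then 1 else 0))"

definition lin_comb :: "nat \<Rightarrow> (nat \<Rightarrow> real) \<Rightarrow> (nat \<Rightarrow> nat \<Rightarrow> real) \<Rightarrow> nat \<Rightarrow> real" where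
  "lin_comb p c v = (\<lambda>t. \<Sum>i<p. c i * v i t)"

abbreviation sqnorm :: "nat \<Rightarrow> (nat \<Rightarrow> real) \<Rightarrow> real" where
  "sqnorm n x \<equiv> vinner n x x"

lemma vinner_commute: "vinner n x y = vinner n y x"
  unfolding vinner_def by (simp add: mult.commute)

lemma sqnorm_nonneg: "0 \<le> sqnorm n x"
  unfolding vinner_def by (auto intro: sum_nonneg)

lemma vinner_cong: "(\<And>t. t < n \<Longrightarrow> x t = x' t) \<Longrightarrow> (\<And>t. t < n \<Longrightarrow> y t = y' t) \<Longrightarrow> vinner n x y = vinner n x' y'"
  unfolding vinner_def by auto

lemma sqnorm_eq_0_iff: "sqnorm n x = 0 \<longleftrightarrow> (\<forall>t<n. x t = 0)"
  unfolding vinner_def by (subst sum_nonneg_eq_0_iff) auto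

lemma vinner_add_right: "vinner n x (\<lambda>t. y t + z t) = vinner n x y + vinner n x z"
  unfolding vinner_def by (simp add: distrib_left sum.distrib)

lemma vinner_diff_right: "vinner n x (\<lambda>t. y t - z t) = vinner n x y - vinner n x z"
  unfolding vinner_def by (simp add: right_diff_distrib sum_subtractf)

lemma vinner_scale_right: "vinner n x (\<lambda>t. a * y t) = a * vinner n x y"
  unfolding vinner_def by (simp add: sum_distrib_left ac_simps)

lemma vinner_add_left: "vinner n (\<lambda>t. y t + z t) x = vinner n y x + vinner n z x"
  unfolding vinner_def by (simp add: distrib_right sum.distrib)

lemma vinner_diff_left: "vinner n (\<lambda>t. y t - z t) x = vinner n y x - vinner n z x"
  unfolding vinner_def by (simp add: left_diff_distrib sum_subtractf)

lemma vinner_scale_left: "vinner n (\<lambda>t. a * y t) x = a * vinner n y x"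
  unfolding vinner_def by (simp add: sum_distrib_left ac_simps)

lemma vinner_lin_comb_right: "vinner n x (lin_comb p c v) = (\<Sum>i<p. c i * vinner n x (v i))"
  unfolding vinner_def lin_comb_def by (simp add: sum_distrib_left sum_distrib_right ac_simps sum.swap[of _ "{..<n}"])

lemma vinner_lin_comb_left: "vinner n (lin_comb p c v) x = (\<Sum>i<p. c i * vinner n (v i) x)"
  using vinner_lin_comb_right[of n x p c v] by (simp add: vinner_commute)

lemma orthonormal_vinner_lin_comb:
  assumes "orthonormal n p v" "j < p"
  shows "vinner n (v j) (lin_comb p c v) = c j"
proof -
  have "vinner n (v j) (lin_comb p c v) = (\<Sum>i<p. c i * (if j = i then 1 else 0))"
    unfolding vinner_lin_comb_right using assms unfolding orthonormal_def by (intro sum.cong) auto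
  also have "\<dots> = c j" using assms(2) by (simp add: if_distrib cong: if_cong)
  finally show ?thesis .
qed

lemma orthonormal_lin_comb_vinner:
  assumes "orthonormal n p v"
  shows "vinner n (lin_comb p c v) (lin_comb p d v) = (\<Sum>i<p. c i * d i)"
  unfolding vinner_lin_comb_left using orthonormal_vinner_lin_comb[OF assms] by (simp add: vinner_commute)

lemma bessel_inequality:
  assumes "orthonormal n p v"
  shows "(\<Sum>i<p. (vinner n (v i) x)\<^sup>2) \<le> sqnorm n x"
proof -
  define c where "c i = vinner n (v i) x" for i
  have 0: "0 \<le> sqnorm n (\<lambda>t. x t - lin_comb p c v t)" by (rule sqnorm_nonneg)
  have "sqnorm n (\<lambda>t. x t - lin_comb p c v t)
     = sqnorm n x - 2 * (\<Sum>i<p. c i * c i) + (\<Sum>i<p. c i * c i)"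
    unfolding vinner_diff_left vinner_diff_right
    using orthonormal_lin_comb_vinner[OF assms, of c c] vinner_lin_comb_right[of n x p c v] vinner_lin_comb_left[of n p c v x]
    by (simp add: c_def vinner_commute)
  with 0 show ?thesis by (simp add: c_def power2_eq_square)
qed

lemma vinner_cauchy_schwarz: "(vinner n x y)\<^sup>2 \<le> sqnorm n x * sqnorm n y"
proof (cases "sqnorm n y = 0")
  case True
  then have "\<forall>t<n. y t = 0" by (simp add: sqnorm_eq_0_iff)
  then have "vinner n x y = 0" unfolding vinner_def by simp
  then show ?thesis by (simp add: sqnorm_nonneg)
next
  case False
  then have yp: "sqnorm n y > 0" using sqnorm_nonneg[of n y] by simp
  define a where "a = vinner n x y / sqnorm n y"
  have "0 \<le> sqnorm n (\<lambda>t. x t - a * y t)" by (rule sqnorm_nonneg)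
  also have "\<dots> = sqnorm n x - 2 * a * vinner n x y + a * a * sqnorm n y"
    unfolding vinner_diff_left vinner_diff_right vinner_scale_left vinner_scale_right by (simp add: vinner_commute algebra_simps)
  also have "\<dots> = sqnorm n x - (vinner n x y)\<^sup>2 / sqnorm n y"
    using yp unfolding a_def by (simp add: field_simps power2_eq_square)
  finally have "(vinner n x y)\<^sup>2 / sqnorm n y \<le> sqnorm n x" by simp
  then show ?thesis using yp by (simp add: divide_le_eq mult.commute)
qed

lemma linear_dependence_exists:
  "finite J \<Longrightarrow> card J > n \<Longrightarrow>
   \<exists>c. (\<exists>j\<in>J. c j \<noteq> 0) \<and> (\<forall>t<n. (\<Sum>j\<in>J. c j * f j t) = (0::real))"
proof (induction n arbitrary: J f)
  case 0
  then have "J \<noteq> {}" by auto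
  then obtain j where "j \<in> J" by blast
  then show ?case by (intro exI[of _ "\<lambda>_. 1"]) auto
next
  case (Suc n)
  show ?case
  proof (cases "\<forall>j\<in>J. f j n = 0")
    case True
    from Suc.IH[OF Suc.prems(1), of f] Suc.prems(2) obtain c where
      c: "\<exists>j\<in>J. c j \<noteq> 0" "\<forall>t<n. (\<Sum>j\<in>J. c j * f j t) = 0" by auto
    have "\<forall>t<Suc n. (\<Sum>j\<in>J. c j * f j t) = 0"
    proof (intro allI impI)
      fix t assume "t < Suc n"
      then consider "t < n" | "t = n" by linarith
      then show "(\<Sum>j\<in>J. c j * f j t) = 0"
        by cases (use c True in auto)
    qed
    then show ?thesis using c by blast
  next
    case False
    then obtain j0 where j0: "j0 \<in> J" "f j0 n \<noteq> 0" by auto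
    define J' where "J' = J - {j0}"
    define g where "g j t = f j t - (f j n / f j0 n) * f j0 t" for j t
    have fJ': "finite J'" using Suc.prems(1) unfolding J'_def by auto
    have cJ': "card J' > n" using Suc.prems j0 unfolding J'_def by (simp add: card_Diff_singleton)
    from Suc.IH[OF fJ' cJ', of g] obtain c' where
      c': "\<exists>j\<in>J'. c' j \<noteq> 0" "\<forall>t<n. (\<Sum>j\<in>J'. c' j * g j t) = 0" by auto
    have c'n: "\<forall>t<Suc n. (\<Sum>j\<in>J'. c' j * g j t) = 0"
    proof (intro allI impI)
      fix t assume "t < Suc n"
      then consider "t < n" | "t = n" by linarith
      then show "(\<Sum>j\<in>J'. c' j * g j t) = 0"
      proof cases
        case 1 then show ?thesis using c' by auto
      next
        case 2 then show ?thesis using j0(2) unfolding g_def by simp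
      qed
    qed
    define c where "c j = (if j = j0 then - (\<Sum>i\<in>J'. c' i * f i n) / f j0 n else c' j)" for j
    have JJ: "J = insert j0 J'" "j0 \<notin> J'" using j0 unfolding J'_def by auto
    have "\<forall>t<Suc n. (\<Sum>j\<in>J. c j * f j t) = 0"
    proof (intro allI impI)
      fix t assume t: "t < Suc n"
      have "(\<Sum>j\<in>J. c j * f j t) = c j0 * f j0 t + (\<Sum>j\<in>J'. c' j * f j t)"
        unfolding JJ(1) using fJ' JJ(2) by (simp add: c_def) (intro sum.cong, auto)
      also have "(\<Sum>j\<in>J'. c' j * f j t) = (\<Sum>j\<in>J'. c' j * g j t) + (\<Sum>j\<in>J'. c' j * f j n) / f j0 n * f j0 t"
        unfolding g_def by (simp add: algebra_simps sum.distrib sum_subtractf sum_distrib_left sum_distrib_right sum_divide_distrib)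
      finally show "(\<Sum>j\<in>J. c j * f j t) = 0" using c'n t by (simp add: c_def)
    qed
    moreover have "\<exists>j\<in>J. c j \<noteq> 0" using c' JJ unfolding c_def by auto
    ultimately show ?thesis by blast
  qed
qed

lemma orthonormal_le_dim:
  assumes "orthonormal n p v" shows "p \<le> n"
proof (rule ccontr)
  assume "\<not> p \<le> n"
  then have "card {..<p} > n" by simp
  from linear_dependence_exists[OF _ this, of v] obtain c where c: "\<exists>j<p. c j \<noteq> 0" "\<forall>t<n. (\<Sum>j<p. c j * v j t) = 0"
    by auto
  then obtain j where j: "j < p" "c j \<noteq> 0" by auto
  have "c j = vinner n (v j) (lin_comb p c v)" using orthonormal_vinner_lin_comb[OF assms j(1)] by simp
  also have "\<dots> = 0" unfolding vinner_def lin_comb_def using c(2) by simp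
  finally show False using j by simp
qed

lemma nonzero_orthogonal_exists:
  assumes "k < n"
  shows "\<exists>y. (\<exists>t<n. y t \<noteq> 0) \<and> (\<forall>i<k. vinner n (w i) y = 0)"
proof -
  have "card {..<n} > k" using assms by simp
  from linear_dependence_exists[OF _ this, of "\<lambda>t i. w i t"] obtain c where
    c: "\<exists>j<n. c j \<noteq> 0" "\<forall>i<k. (\<Sum>j<n. c j * w i j) = 0" by auto
  show ?thesis
    by (rule exI[of _ c]) (use c in \<open>auto simp: vinner_def mult.commute\<close>)
qed

definition normalize_vec :: "nat \<Rightarrow> (nat \<Rightarrow> real) \<Rightarrow> nat \<Rightarrow> real" where
  "normalize_vec n y = (\<lambda>t. y t / sqrt (sqnorm n y))"

lemma sqnorm_normalize_vec:
  assumes "\<exists>t<n. y t \<noteq> 0"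
  shows "sqnorm n (normalize_vec n y) = 1"
proof -
  have "sqnorm n y \<noteq> 0" using assms sqnorm_eq_0_iff by auto
  then have p: "sqnorm n y > 0" using sqnorm_nonneg[of n y] by simp
  have "sqnorm n (normalize_vec n y) = sqnorm n y / (sqrt (sqnorm n y))^2"
    unfolding normalize_vec_def vinner_def by (simp add: sum_divide_distrib power2_eq_square)
  then show ?thesis using p by simp
qed

lemma vinner_normalize_vec: "vinner n x (normalize_vec n y) = vinner n x y / sqrt (sqnorm n y)"
  unfolding normalize_vec_def vinner_def by (simp add: sum_divide_distrib)

lemma orthonormal_extend:
  assumes "orthonormal n p v" "\<exists>t<n. y t \<noteq> 0" "\<forall>i<p. vinner n (v i) y = 0"
  shows "orthonormal n (Suc p) (v(p := normalize_vec n y))"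
  using assms sqnorm_normalize_vec[OF assms(2)] unfolding orthonormal_def
  by (auto simp: vinner_normalize_vec vinner_commute less_Suc_eq)

lemma orthonormal_basis_expansion:
  assumes "orthonormal n n v" "t < n"
  shows "x t = lin_comb n (\<lambda>i. vinner n (v i) x) v t"
proof (rule ccontr)
  assume ne: "x t \<noteq> lin_comb n (\<lambda>i. vinner n (v i) x) v t"
  define y where "y s = x s - lin_comb n (\<lambda>i. vinner n (v i) x) v s" for s
  have y0: "\<exists>t<n. y t \<noteq> 0" using ne assms(2) unfolding y_def by auto
  have "\<forall>i<n. vinner n (v i) y = 0"
  proof (intro allI impI)
    fix i assume "i < n"
    have "vinner n (v i) y = vinner n (v i) x - vinner n (v i) (lin_comb n (\<lambda>i. vinner n (v i) x) v)"
      unfolding y_def by (rule vinner_diff_right)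
    then show "vinner n (v i) y = 0" using orthonormal_vinner_lin_comb[OF assms(1) \<open>i < n\<close>] by simp
  qed
  from orthonormal_le_dim[OF orthonormal_extend[OF assms(1) y0 this]] show False by simp
qed

section \<open>Gram--Schmidt orthonormalization\<close>

definition in_span :: "nat \<Rightarrow> nat \<Rightarrow> (nat \<Rightarrow> nat \<Rightarrow> real) \<Rightarrow> (nat \<Rightarrow> real) \<Rightarrow> bool" where
  "in_span n N f x \<longleftrightarrow> (\<exists>c. \<forall>t<n. x t = (\<Sum>j<N. c j * f j t))"

lemma in_span_generator: "j < N \<Longrightarrow> in_span n N f (f j)"
  unfolding in_span_def
proof (rule exI[of _ "\<lambda>i. if i = j then 1 else 0"], intro allI impI)
  fix t assume "j < N" "t < n"
  have "(\<Sum>i<N. (if i = j then 1 else 0) * f i t) = (\<Sum>i<N. if i = j then f i t else 0)"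
    by (intro sum.cong) auto
  also have "\<dots> = f j t" using \<open>j < N\<close> by (simp add: sum.delta')
  finally show "f j t = (\<Sum>i<N. (if i = j then 1 else 0) * f i t)" by simp
qed

lemma in_span_Suc: "in_span n N f x \<Longrightarrow> in_span n (Suc N) f x"
  unfolding in_span_def
proof (elim exE)
  fix c assume c: "\<forall>t<n. x t = (\<Sum>j<N. c j * f j t)"
  show "\<exists>c. \<forall>t<n. x t = (\<Sum>j<Suc N. c j * f j t)"
    by (rule exI[of _ "\<lambda>j. if j < N then c j else 0"]) (use c in auto)
qed

lemma in_span_diff: "in_span n N f x \<Longrightarrow> in_span n N f y \<Longrightarrow> in_span n N f (\<lambda>t. x t - y t)"
  unfolding in_span_def
proof (elim exE)
  fix c d assume c: "\<forall>t<n. x t = (\<Sum>j<N. c j * f j t)" and d: "\<forall>t<n. y t = (\<Sum>j<N. d j * f j t)"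
  show "\<exists>c. \<forall>t<n. x t - y t = (\<Sum>j<N. c j * f j t)"
    by (rule exI[of _ "\<lambda>j. c j - d j"]) (use c d in \<open>auto simp: left_diff_distrib sum_subtractf\<close>)
qed

lemma in_span_scale: "in_span n N f x \<Longrightarrow> in_span n N f (\<lambda>t. a * x t)"
  unfolding in_span_def
proof (elim exE)
  fix c assume c: "\<forall>t<n. x t = (\<Sum>j<N. c j * f j t)"
  show "\<exists>c. \<forall>t<n. a * x t = (\<Sum>j<N. c j * f j t)"
    by (rule exI[of _ "\<lambda>j. a * c j"]) (use c in \<open>auto simp: sum_distrib_left ac_simps\<close>)
qed

lemma in_span_lin_comb: "(\<And>i. i < m \<Longrightarrow> in_span n N f (g i)) \<Longrightarrow> in_span n N f (lin_comb m c g)"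
proof (induction m)
  case 0
  then show ?case unfolding in_span_def lin_comb_def by (intro exI[of _ "\<lambda>_. 0"]) simp
next
  case (Suc m)
  have a: "in_span n N f (lin_comb m c g)" using Suc by auto
  have b: "in_span n N f (\<lambda>t. - c m * g m t)" using in_span_scale[OF Suc.prems[of m], of "- c m"] by simp
  have "in_span n N f (\<lambda>t. lin_comb m c g t - (- c m * g m t))" by (rule in_span_diff[OF a b])
  then show ?case unfolding lin_comb_def by simp
qed

lemma in_span_orthogonal:
  assumes "in_span n N f x" "\<And>j. j < N \<Longrightarrow> vinner n w (f j) = 0"
  shows "vinner n w x = 0"
proof -
  obtain c where c: "\<forall>t<n. x t = (\<Sum>j<N. c j * f j t)" using assms(1) unfolding in_span_def by auto
  have "vinner n w x = vinner n w (lin_comb N c f)" by (rule vinner_cong) (auto simp: c lin_comb_def)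
  also have "\<dots> = 0" unfolding vinner_lin_comb_right using assms(2) by simp
  finally show ?thesis .
qed

lemma in_span_expansion:
  assumes o: "orthonormal n m g" and f: "\<forall>j<N. \<forall>t<n. f j t = lin_comb m (\<lambda>a. vinner n (g a) (f j)) g t"
    and x: "in_span n N f x"
  shows "\<forall>t<n. x t = lin_comb m (\<lambda>a. vinner n (g a) x) g t"
proof -
  obtain c where c: "\<forall>t<n. x t = (\<Sum>j<N. c j * f j t)" using x unfolding in_span_def by auto
  define d where "d a = (\<Sum>j<N. c j * vinner n (g a) (f j))" for a
  have xd: "\<forall>t<n. x t = lin_comb m d g t"
  proof (intro allI impI)
    fix t assume t: "t < n"
    have "x t = (\<Sum>j<N. c j * lin_comb m (\<lambda>a. vinner n (g a) (f j)) g t)" using c f t by simp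
    also have "\<dots> = lin_comb m d g t"
      unfolding lin_comb_def d_def by (simp add: sum_distrib_left sum_distrib_right sum.swap[of _ "{..<N}"] ac_simps)
    finally show "x t = lin_comb m d g t" .
  qed
  have "vinner n (g a) x = d a" if "a < m" for a
  proof -
    have "vinner n (g a) x = vinner n (g a) (lin_comb m d g)" by (rule vinner_cong) (use xd in auto)
    then show ?thesis using orthonormal_vinner_lin_comb[OF o that] by simp
  qed
  then have "lin_comb m (\<lambda>a. vinner n (g a) x) g = lin_comb m d g" unfolding lin_comb_def by (intro ext sum.cong) auto
  then show ?thesis using xd by simp
qed

lemma gram_schmidt_step:
  assumes o: "orthonormal n m g"
    and f: "\<forall>j<N. \<forall>t<n. f j t = lin_comb m (\<lambda>a. vinner n (g a) (f j)) g t"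
    and r_def: "r = (\<lambda>t. f N t - lin_comb m (\<lambda>a. vinner n (g a) (f N)) g t)" and r: "\<exists>t<n. r t \<noteq> 0"
  defines "g' \<equiv> g(m := normalize_vec n r)"
  shows "orthonormal n (Suc m) g'"
    and "\<forall>j<Suc N. \<forall>t<n. f j t = lin_comb (Suc m) (\<lambda>a. vinner n (g' a) (f j)) g' t"
proof -
  have rperp: "\<forall>i<m. vinner n (g i) r = 0"
    unfolding r_def vinner_diff_right using orthonormal_vinner_lin_comb[OF o] by simp
  show o': "orthonormal n (Suc m) g'" unfolding g'_def by (rule orthonormal_extend[OF o r rperp])
  have rpos: "sqnorm n r > 0" using r sqnorm_eq_0_iff sqnorm_nonneg[of n r] by (metis order_le_less)
  have gm: "g' m = normalize_vec n r" "\<And>a. a < m \<Longrightarrow> g' a = g a" unfolding g'_def by auto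
  have perp: "vinner n (g' m) (g i) = 0" if i: "i < m" for i
  proof -
    have "vinner n (g' m) (g' i) = 0" using o' i unfolding orthonormal_def by auto
    then show ?thesis using gm(2)[OF i] by simp
  qed
  show "\<forall>j<Suc N. \<forall>t<n. f j t = lin_comb (Suc m) (\<lambda>a. vinner n (g' a) (f j)) g' t"
  proof (intro allI impI)
    fix j t assume j: "j < Suc N" and t: "t < n"
    have lcS: "lin_comb (Suc m) (\<lambda>a. vinner n (g' a) (f j)) g' t
          = lin_comb m (\<lambda>a. vinner n (g a) (f j)) g t + vinner n (g' m) (f j) * g' m t"
      unfolding lin_comb_def using gm by simp
    consider "j < N" | "j = N" using j by linarith
    then show "f j t = lin_comb (Suc m) (\<lambda>a. vinner n (g' a) (f j)) g' t"
    proof cases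
      case 1
      have "vinner n (g' m) (f j) = vinner n (g' m) (lin_comb m (\<lambda>a. vinner n (g a) (f j)) g)"
        by (rule vinner_cong) (use f 1 in auto)
      also have "\<dots> = 0" unfolding vinner_lin_comb_right using perp by simp
      finally show ?thesis using f 1 t lcS by simp
    next
      case 2
      have "vinner n (g' m) (f N) = vinner n (g' m) (\<lambda>t. r t + lin_comb m (\<lambda>a. vinner n (g a) (f N)) g t)"
        by (rule vinner_cong) (auto simp: r_def)
      also have "\<dots> = vinner n (g' m) r"
        unfolding vinner_add_right vinner_lin_comb_right using perp by simp
      also have "\<dots> = sqnorm n r / sqrt (sqnorm n r)"
        unfolding gm by (subst vinner_commute) (rule vinner_normalize_vec)
      also have "\<dots> = sqrt (sqnorm n r)" using rpos by (simp add: real_div_sqrt)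
      finally have "vinner n (g' m) (f N) * g' m t = r t" using rpos unfolding gm normalize_vec_def by simp
      then show ?thesis using 2 lcS unfolding r_def by simp
    qed
  qed
qed

lemma gram_schmidt_exists:
  "\<exists>m g. m \<le> N \<and> orthonormal n m g \<and>
      (\<forall>j<N. \<forall>t<n. f j t = lin_comb m (\<lambda>a. vinner n (g a) (f j)) g t) \<and>
      (\<forall>a<m. in_span n N f (g a))"
proof (induction N)
  case 0
  show ?case by (rule exI[of _ 0]) (auto simp: orthonormal_def)
next
  case (Suc N)
  then obtain m g where mg: "m \<le> N" "orthonormal n m g"
    "\<forall>j<N. \<forall>t<n. f j t = lin_comb m (\<lambda>a. vinner n (g a) (f j)) g t" "\<forall>a<m. in_span n N f (g a)" by blast
  define r where "r = (\<lambda>t. f N t - lin_comb m (\<lambda>a. vinner n (g a) (f N)) g t)"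
  have g_span: "\<forall>a<m. in_span n (Suc N) f (g a)" using mg(4) in_span_Suc by auto
  show ?case
  proof (cases "\<exists>t<n. r t \<noteq> 0")
    case False
    then have "\<forall>j<Suc N. \<forall>t<n. f j t = lin_comb m (\<lambda>a. vinner n (g a) (f j)) g t"
      using mg(3) unfolding r_def by (auto simp: less_Suc_eq)
    then show ?thesis using mg(1,2) g_span by (intro exI[of _ m] exI[of _ g]) auto
  next
    case True
    have r_span: "in_span n (Suc N) f (normalize_vec n r)"
      unfolding r_def normalize_vec_def divide_inverse mult.commute[of _ "inverse _"]
      by (intro in_span_scale in_span_diff in_span_generator in_span_lin_comb in_span_Suc) (use mg(4) in auto)
    have "\<forall>a<Suc m. in_span n (Suc N) f ((g(m := normalize_vec n r)) a)"
      using g_span r_span by (auto simp: less_Suc_eq)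
    moreover have "Suc m \<le> Suc N" using mg(1) by simp
    ultimately show ?thesis using gram_schmidt_step[OF mg(2,3) r_def True] by blast
  qed
qed

section \<open>The spectral theorem for symmetric matrices\<close>

definition mat_app :: "real mat \<Rightarrow> (nat \<Rightarrow> real) \<Rightarrow> nat \<Rightarrow> real" where
  "mat_app A x = (\<lambda>i. \<Sum>j<dim_col A. A $$ (i, j) * x j)"

abbreviation op_norm_le :: "nat \<Rightarrow> nat \<Rightarrow> real mat \<Rightarrow> real \<Rightarrow> bool" where
  "op_norm_le m n A s \<equiv> \<forall>x. sqnorm m (mat_app A x) \<le> s\<^sup>2 * sqnorm n x"

abbreviation contraction :: "nat \<Rightarrow> nat \<Rightarrow> real mat \<Rightarrow> bool" where
  "contraction m n A \<equiv> \<forall>x. sqnorm m (mat_app A x) \<le> sqnorm n x"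

definition symmetric_on :: "nat \<Rightarrow> real mat \<Rightarrow> bool" where
  "symmetric_on n S \<longleftrightarrow> S \<in> carrier_mat n n \<and> (\<forall>i<n. \<forall>j<n. S $$ (i, j) = S $$ (j, i))"

lemma complex_eigenvector_exists:
  assumes T: "T \<in> carrier_mat m m" and m: "0 < m"
  shows "\<exists>(c::complex) v. (\<exists>i<m. v i \<noteq> 0) \<and> (\<forall>i<m. (\<Sum>j<m. of_real (T $$ (i, j)) * v j) = c * v i)"
proof -
  define Tc where "Tc = map_mat complex_of_real T"
  have Tc: "Tc \<in> carrier_mat m m" using T unfolding Tc_def by auto
  have "degree (char_poly Tc) = m" using degree_monic_char_poly[OF Tc] by auto
  then have "\<not> constant (poly (char_poly Tc))" using m constant_degree[of "char_poly Tc"] by simp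
  from fundamental_theorem_of_algebra[OF this] obtain c where "poly (char_poly Tc) c = 0" by auto
  then have "eigenvalue Tc c" using eigenvalue_root_char_poly[OF Tc] by auto
  then obtain v where "eigenvector Tc v c" unfolding eigenvalue_def by auto
  then have v: "v \<in> carrier_vec m" "v \<noteq> 0\<^sub>v m" "Tc *\<^sub>v v = c \<cdot>\<^sub>v v"
    unfolding eigenvector_def using Tc by auto
  have "(\<Sum>j<m. of_real (T $$ (i, j)) * v $ j) = c * v $ i" if "i < m" for i
  proof -
    have "(Tc *\<^sub>v v) $ i = (\<Sum>j<m. of_real (T $$ (i, j)) * v $ j)"
      using that Tc T v(1) unfolding Tc_def
      by (auto simp: mult_mat_vec_def scalar_prod_def row_def atLeast0LessThan intro!: sum.cong)
    then show ?thesis using v(3) that v(1) by simp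
  qed
  moreover obtain i0 where "i0 < m" "v $ i0 \<noteq> 0" using v(1,2)
    by (metis carrier_vecD eq_vecI index_zero_vec(1) index_zero_vec(2))
  ultimately show ?thesis by (intro exI[of _ c] exI[of _ "\<lambda>j. v $ j"]) auto
qed

text \<open>The Rayleigh quotient \<open>v\<^sup>* T v / v\<^sup>* v\<close> of a real symmetric \<open>T\<close> is real.\<close>

lemma symmetric_eigenvalue_real:
  assumes S: "symmetric_on m T" and v: "\<exists>i<m. v i \<noteq> 0"
    and Tv: "\<forall>i<m. (\<Sum>j<m. of_real (T $$ (i, j)) * v j) = c * v i"
  shows "Im c = 0"
proof -
  define q where "q = (\<Sum>i<m. \<Sum>j<m. cnj (v i) * of_real (T $$ (i, j)) * v j)"
  define s where "s = (\<Sum>i<m. (Re (v i))\<^sup>2 + (Im (v i))\<^sup>2)"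
  have "q = (\<Sum>i<m. cnj (v i) * (\<Sum>j<m. of_real (T $$ (i, j)) * v j))"
    unfolding q_def by (simp add: sum_distrib_left mult.assoc)
  also have "\<dots> = c * (\<Sum>i<m. cnj (v i) * v i)" using Tv by (simp add: sum_distrib_left ac_simps)
  also have "(\<Sum>i<m. cnj (v i) * v i) = of_real s"
    unfolding s_def by (simp add: complex_eq_iff Re_sum Im_sum power2_eq_square)
  finally have qs: "q = c * of_real s" .
  have "cnj q = (\<Sum>i<m. \<Sum>j<m. v i * of_real (T $$ (i, j)) * cnj (v j))"
    unfolding q_def by simp
  also have "\<dots> = (\<Sum>j<m. \<Sum>i<m. v i * of_real (T $$ (i, j)) * cnj (v j))"
    by (rule sum.swap)
  also have "\<dots> = q" unfolding q_def
    using S unfolding symmetric_on_def by (intro sum.cong refl) (auto simp: ac_simps)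
  finally have "Im (cnj q) = Im q" by simp
  then have "Im q = 0" by simp
  obtain i0 where i0: "i0 < m" "v i0 \<noteq> 0" using v by blast
  have "0 < (Re (v i0))\<^sup>2 + (Im (v i0))\<^sup>2"
    using i0 by (metis complex_eq_iff zero_complex.simps sum_power2_gt_zero_iff)
  also have "\<dots> \<le> s" unfolding s_def using i0 by (intro member_le_sum) auto
  finally show ?thesis using qs \<open>Im q = 0\<close> by simp
qed

lemma symmetric_real_eigenvector:
  assumes S: "symmetric_on m T" and m: "0 < m"
  shows "\<exists>lam z. (\<exists>t<m. z t \<noteq> 0) \<and> (\<forall>t<m. mat_app T z t = lam * z t)"
proof -
  have T: "T \<in> carrier_mat m m" using S unfolding symmetric_on_def by auto
  obtain c :: complex and v :: "nat \<Rightarrow> complex" where v: "\<exists>i<m. v i \<noteq> 0" and Tv: "\<forall>i<m. (\<Sum>j<m. of_real (T $$ (i, j)) * v j) = c * v i"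
    using complex_eigenvector_exists[OF T m] by blast
  define lam where "lam = Re c"
  have c: "c = of_real lam" using symmetric_eigenvalue_real[OF S v Tv] unfolding lam_def by (simp add: complex_eq_iff)
  have Re_eq: "(\<Sum>j<m. T $$ (i, j) * Re (v j)) = lam * Re (v i)" if "i < m" for i
    using arg_cong[OF Tv[rule_format, OF that], of Re] unfolding c by (simp add: Re_sum)
  have Im_eq: "(\<Sum>j<m. T $$ (i, j) * Im (v j)) = lam * Im (v i)" if "i < m" for i
    using arg_cong[OF Tv[rule_format, OF that], of Im] unfolding c by (simp add: Im_sum)
  have "dim_col T = m" using T by auto
  then have Re_v: "\<forall>t<m. mat_app T (\<lambda>j. Re (v j)) t = lam * Re (v t)"
    and Im_v: "\<forall>t<m. mat_app T (\<lambda>j. Im (v j)) t = lam * Im (v t)"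
    using Re_eq Im_eq by (simp_all add: mat_app_def)
  obtain t0 where t0: "t0 < m" "v t0 \<noteq> 0" using v by blast
  show ?thesis
  proof (cases "Re (v t0) = 0")
    case False
    with t0 Re_v show ?thesis by (intro exI[of _ lam] exI[of _ "\<lambda>j. Re (v j)"]) auto
  next
    case True
    then have "Im (v t0) \<noteq> 0" using t0 by (simp add: complex_eq_iff)
    with t0 Im_v show ?thesis by (intro exI[of _ lam] exI[of _ "\<lambda>j. Im (v j)"]) auto
  qed
qed

lemma mat_app_lin_comb: "mat_app A (lin_comb p c v) = lin_comb p c (\<lambda>i. mat_app A (v i))"
  unfolding mat_app_def lin_comb_def by (rule ext) (simp add: sum_distrib_left sum.swap[of _ "{..<p}"] ac_simps)

lemma mat_app_cong: "dim_col A = n \<Longrightarrow> (\<And>t. t < n \<Longrightarrow> x t = y t) \<Longrightarrow> mat_app A x = mat_app A y"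
  unfolding mat_app_def by auto

lemma symmetric_on_vinner:
  assumes "symmetric_on n S"
  shows "vinner n x (mat_app S y) = vinner n (mat_app S x) y"
proof -
  have dc: "dim_col S = n" using assms unfolding symmetric_on_def by auto
  have "vinner n x (mat_app S y) = (\<Sum>i<n. \<Sum>j<n. x i * S $$ (i, j) * y j)"
    unfolding vinner_def mat_app_def dc by (simp add: sum_distrib_left ac_simps)
  also have "\<dots> = (\<Sum>j<n. \<Sum>i<n. x i * S $$ (i, j) * y j)" by (rule sum.swap)
  also have "\<dots> = (\<Sum>j<n. y j * (\<Sum>i<n. S $$ (j, i) * x i))"
    using assms by (auto simp: symmetric_on_def sum_distrib_left ac_simps intro!: sum.cong)
  also have "\<dots> = vinner n (mat_app S x) y" unfolding vinner_def mat_app_def dc by (simp add: mult.commute)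
  finally show ?thesis .
qed

text \<open>Gram--Schmidt applied to the projections of the unit vectors onto the orthogonal
  complement of \<open>w\<close> yields an orthonormal basis of that complement.\<close>

lemma orthogonal_complement_basis:
  assumes k: "k < n" and o: "orthonormal n k w"
  shows "\<exists>m g. 0 < m \<and> orthonormal n m g \<and> (\<forall>a<m. \<forall>i<k. vinner n (w i) (g a) = 0)
    \<and> (\<forall>x. (\<forall>i<k. vinner n (w i) x = 0) \<longrightarrow> (\<forall>t<n. x t = lin_comb m (\<lambda>a. vinner n (g a) x) g t))"
proof -
  define inW where "inW x \<longleftrightarrow> (\<forall>i<k. vinner n (w i) x = 0)" for x
  define e where "e (t::nat) (s::nat) = (if s = t then 1 else (0::real))" for t s
  have ipe: "vinner n x (e t) = x t" if "t < n" for x t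
    unfolding vinner_def e_def using that by (simp add: if_distrib[of "\<lambda>z. _ * z"] sum.delta' cong: if_cong)
  define f where "f t s = e t s - lin_comb k (\<lambda>i. vinner n (w i) (e t)) w s" for t s
  have fW: "inW (f t)" for t
    unfolding inW_def f_def
  proof (intro allI impI)
    fix i assume "i < k"
    show "vinner n (w i) (\<lambda>s. e t s - lin_comb k (\<lambda>i. vinner n (w i) (e t)) w s) = 0"
      unfolding vinner_diff_right using orthonormal_vinner_lin_comb[OF o \<open>i < k\<close>] by simp
  qed
  obtain m g where g: "m \<le> n" "orthonormal n m g"
      "\<forall>j<n. \<forall>t<n. f j t = lin_comb m (\<lambda>a. vinner n (g a) (f j)) g t" "\<forall>a<m. in_span n n f (g a)"
    using gram_schmidt_exists[of n n f] by blast
  have gW: "inW (g a)" if "a < m" for a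
    unfolding inW_def using in_span_orthogonal[OF g(4)[rule_format, OF that]] fW unfolding inW_def by auto
  have Wspan: "\<forall>t<n. x t = lin_comb m (\<lambda>a. vinner n (g a) x) g t" if "inW x" for x
  proof -
    have "in_span n n f x" unfolding in_span_def
    proof (rule exI[of _ x], intro allI impI)
      fix s assume s: "s < n"
      have "(\<Sum>t<n. x t * f t s) = (\<Sum>t<n. x t * e t s) - lin_comb k (\<lambda>i. \<Sum>t<n. x t * vinner n (w i) (e t)) w s"
        unfolding f_def lin_comb_def by (simp add: right_diff_distrib sum_subtractf sum_distrib_left sum_distrib_right sum.swap[of _ "{..<n}"] ac_simps)
      also have "(\<Sum>t<n. x t * e t s) = x s" unfolding e_def using s
        by (simp add: if_distrib[of "\<lambda>z. _ * z"] sum.delta cong: if_cong)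
      also have "(\<lambda>i. \<Sum>t<n. x t * vinner n (w i) (e t)) = (\<lambda>i. vinner n (w i) x)"
      proof (rule ext)
        fix i
        have "(\<Sum>t<n. x t * vinner n (w i) (e t)) = (\<Sum>t<n. w i t * x t)"
          using ipe by (intro sum.cong) (auto simp: mult.commute)
        then show "(\<Sum>t<n. x t * vinner n (w i) (e t)) = vinner n (w i) x" by (simp add: vinner_def)
      qed
      also have "lin_comb k (\<lambda>i. vinner n (w i) x) w s = 0" using that unfolding inW_def lin_comb_def by simp
      finally show "x s = (\<Sum>t<n. x t * f t s)" by simp
    qed
    from in_span_expansion[OF g(2) g(3) this] show ?thesis .
  qed
  obtain y0 where y0: "\<exists>t<n. y0 t \<noteq> 0" "\<forall>i<k. vinner n (w i) y0 = 0"
    using nonzero_orthogonal_exists[OF k] by blast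
  have m0: "m > 0"
  proof (rule ccontr)
    assume "\<not> m > 0"
    then have "m = 0" by simp
    with Wspan[of y0] y0 show False unfolding inW_def lin_comb_def by auto
  qed
  then show ?thesis using g(2) gW Wspan unfolding inW_def by blast
qed

lemma symmetric_eigenvector_orthogonal:
  assumes S: "symmetric_on n S" and k: "k < n" and o: "orthonormal n k w"
    and ev: "\<forall>i<k. \<forall>t<n. mat_app S (w i) t = mu i * w i t"
  shows "\<exists>y lam. (\<exists>t<n. y t \<noteq> 0) \<and> (\<forall>i<k. vinner n (w i) y = 0) \<and> (\<forall>t<n. mat_app S y t = lam * y t)"
proof -
  define inW where "inW x \<longleftrightarrow> (\<forall>i<k. vinner n (w i) x = 0)" for x
  have invar: "inW (mat_app S x)" if "inW x" for x
    unfolding inW_def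
  proof (intro allI impI)
    fix i assume i: "i < k"
    have "vinner n (w i) (mat_app S x) = vinner n (mat_app S (w i)) x" by (rule symmetric_on_vinner[OF S])
    also have "\<dots> = vinner n (\<lambda>t. mu i * w i t) x" by (rule vinner_cong) (use ev i in auto)
    also have "\<dots> = 0" using that i unfolding inW_def vinner_scale_left by simp
    finally show "vinner n (w i) (mat_app S x) = 0" .
  qed
  obtain m g where m0: "0 < m" and g: "orthonormal n m g" and gW: "\<And>a. a < m \<Longrightarrow> inW (g a)"
    and Wspan: "\<And>x. inW x \<Longrightarrow> \<forall>t<n. x t = lin_comb m (\<lambda>a. vinner n (g a) x) g t"
    using orthogonal_complement_basis[OF k o] unfolding inW_def by blast
  define T where "T = mat m m (\<lambda>(a, b). vinner n (g a) (mat_app S (g b)))"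
  have T: "symmetric_on m T" unfolding symmetric_on_def T_def using symmetric_on_vinner[OF S] by (auto simp: vinner_commute)
  obtain lam z where z: "\<exists>t<m. z t \<noteq> 0" "\<forall>t<m. mat_app T z t = lam * z t"
    using symmetric_real_eigenvector[OF T m0] by blast
  define y where "y = lin_comb m z g"
  have yW: "inW y" unfolding inW_def y_def vinner_lin_comb_right using gW unfolding inW_def by simp
  have yy: "sqnorm n y = (\<Sum>i<m. z i * z i)" unfolding y_def by (rule orthonormal_lin_comb_vinner[OF g])
  have ynz: "\<exists>t<n. y t \<noteq> 0"
  proof (rule ccontr)
    assume "\<not> (\<exists>t<n. y t \<noteq> 0)"
    then have "sqnorm n y = 0" using sqnorm_eq_0_iff by auto
    then have "(\<Sum>i<m. z i * z i) = 0" using yy by simp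
    then have "\<forall>i<m. z i = 0" by (subst (asm) sum_nonneg_eq_0_iff) auto
    then show False using z(1) by auto
  qed
  have "\<forall>t<n. mat_app S y t = lam * y t"
  proof (intro allI impI)
    fix t assume t: "t < n"
    have Sg: "mat_app S (g b) t = lin_comb m (\<lambda>a. T $$ (a, b)) g t" if "b < m" for b
      using Wspan[OF invar[OF gW[OF that]], rule_format, OF t] that unfolding lin_comb_def T_def by simp
    have mvy: "mat_app S y = lin_comb m z (\<lambda>i. mat_app S (g i))" unfolding y_def by (rule mat_app_lin_comb)
    have "mat_app S y t = (\<Sum>b<m. z b * mat_app S (g b) t)" unfolding mvy lin_comb_def by (rule refl)
    also have "\<dots> = (\<Sum>b<m. z b * (\<Sum>a<m. T $$ (a, b) * g a t))" using Sg unfolding lin_comb_def by simp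
    also have "\<dots> = (\<Sum>b<m. \<Sum>a<m. T $$ (a, b) * z b * g a t)"
      by (simp add: sum_distrib_left ac_simps)
    also have "\<dots> = (\<Sum>a<m. \<Sum>b<m. T $$ (a, b) * z b * g a t)"
      by (rule sum.swap)
    also have "\<dots> = (\<Sum>a<m. (\<Sum>b<m. T $$ (a, b) * z b) * g a t)"
      by (simp add: sum_distrib_right)
    also have "\<dots> = (\<Sum>a<m. (lam * z a) * g a t)"
      using z(2) unfolding mat_app_def T_def by (intro sum.cong) auto
    also have "\<dots> = lam * y t" unfolding y_def lin_comb_def by (simp add: sum_distrib_left ac_simps)
    finally show "mat_app S y t = lam * y t" .
  qed
  then show ?thesis using ynz yW unfolding inW_def by blast
qed

theorem spectral_theorem:
  assumes S: "symmetric_on n S"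
  shows "\<exists>w mu. orthonormal n n w \<and> (\<forall>i<n. \<forall>t<n. mat_app S (w i) t = mu i * w i t)"
proof -
  have "k \<le> n \<Longrightarrow> \<exists>w mu. orthonormal n k w \<and> (\<forall>i<k. \<forall>t<n. mat_app S (w i) t = mu i * w i t)" for k
  proof (induction k)
    case 0
    then show ?case by (auto simp: orthonormal_def)
  next
    case (Suc k)
    then obtain w mu where wm: "orthonormal n k w" "\<forall>i<k. \<forall>t<n. mat_app S (w i) t = mu i * w i t" by auto
    from symmetric_eigenvector_orthogonal[OF S _ wm] Suc.prems obtain y lam where
      y: "\<exists>t<n. y t \<noteq> 0" "\<forall>i<k. vinner n (w i) y = 0" "\<forall>t<n. mat_app S y t = lam * y t" by auto
    have "mat_app S (normalize_vec n y) = (\<lambda>t. mat_app S y t / sqrt (sqnorm n y))"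
      unfolding normalize_vec_def mat_app_def by (simp add: sum_divide_distrib)
    then have "\<forall>t<n. mat_app S (normalize_vec n y) t = lam * normalize_vec n y t"
      using y(3) unfolding normalize_vec_def by simp
    show ?case
    proof (intro exI conjI)
      show "orthonormal n (Suc k) (w(k := normalize_vec n y))" by (rule orthonormal_extend[OF wm(1) y(1,2)])
      show "\<forall>i<Suc k. \<forall>t<n. mat_app S ((w(k := normalize_vec n y)) i) t = (mu(k := lam)) i * (w(k := normalize_vec n y)) i t"
        using wm(2) \<open>\<forall>t<n. mat_app S (normalize_vec n y) t = lam * normalize_vec n y t\<close> by (auto simp: less_Suc_eq)
    qed
  qed
  then show ?thesis by simp
qed

lemma index_mult_mat_sum:
  assumes "A \<in> carrier_mat m k" "B \<in> carrier_mat k n" "i < m" "j < n"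
  shows "(A * B) $$ (i, j) = (\<Sum>l<k. A $$ (i, l) * B $$ (l, j))"
  using assms by (auto simp: scalar_prod_def atLeast0LessThan intro!: sum.cong)

lemma mat_app_one: "t < n \<Longrightarrow> mat_app (1\<^sub>m n) x t = x t"
  unfolding mat_app_def by (simp add: if_distrib[of "\<lambda>z. z * _"] sum.delta cong: if_cong)

lemma mat_app_minus: "A \<in> carrier_mat a c \<Longrightarrow> B \<in> carrier_mat a c \<Longrightarrow> t < a \<Longrightarrow> mat_app (A - B) x t = mat_app A x t - mat_app B x t"
  unfolding mat_app_def by (simp add: left_diff_distrib sum_subtractf)

lemma mat_app_add: "A \<in> carrier_mat a c \<Longrightarrow> B \<in> carrier_mat a c \<Longrightarrow> t < a \<Longrightarrow> mat_app (A + B) x t = mat_app A x t + mat_app B x t"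
  unfolding mat_app_def by (simp add: distrib_right sum.distrib)

lemma mat_app_mult:
  assumes "A \<in> carrier_mat a k" "B \<in> carrier_mat k c" "t < a"
  shows "mat_app (A * B) x t = mat_app A (mat_app B x) t"
proof -
  have "mat_app (A * B) x t = (\<Sum>j<c. (\<Sum>l<k. A $$ (t, l) * B $$ (l, j)) * x j)"
    unfolding mat_app_def using assms by (auto simp: scalar_prod_def atLeast0LessThan intro!: sum.cong)
  also have "\<dots> = (\<Sum>j<c. \<Sum>l<k. A $$ (t, l) * B $$ (l, j) * x j)" by (simp add: sum_distrib_right)
  also have "\<dots> = (\<Sum>l<k. \<Sum>j<c. A $$ (t, l) * B $$ (l, j) * x j)" by (rule sum.swap)
  also have "\<dots> = mat_app A (mat_app B x) t" unfolding mat_app_def using assms by (simp add: sum_distrib_left ac_simps)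
  finally show ?thesis .
qed

lemma mat_app_add_scale: "mat_app A (\<lambda>t. x t + s * y t) = (\<lambda>t. mat_app A x t + s * mat_app A y t)"
  unfolding mat_app_def by (rule ext) (simp add: distrib_left sum.distrib sum_distrib_left ac_simps)

section \<open>Uniqueness of positive semidefinite square roots\<close>

definition psd_on :: "nat \<Rightarrow> real mat \<Rightarrow> bool" where
  "psd_on n B \<longleftrightarrow> symmetric_on n B \<and> (\<forall>x. 0 \<le> vinner n x (mat_app B x))"

lemma psd_iff_psd_on:
  assumes "B \<in> carrier_mat n n"
  shows "psd B \<longleftrightarrow> psd_on n B"
proof
  assume p: "psd B"
  have s: "symmetric_on n B" unfolding symmetric_on_def using assms p unfolding psd_def
    by (auto, metis carrier_matD index_transpose_mat(1))
  have "0 \<le> vinner n x (mat_app B x)" for x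
  proof -
    have "0 \<le> vec n x \<bullet> (B *\<^sub>v vec n x)" using p assms unfolding psd_def by auto
    also have "vec n x \<bullet> (B *\<^sub>v vec n x) = vinner n x (mat_app B x)"
      using assms unfolding vinner_def mat_app_def by (simp add: scalar_prod_def atLeast0LessThan)
    finally show ?thesis .
  qed
  then show "psd_on n B" using s unfolding psd_on_def by auto
next
  assume p: "psd_on n B"
  have "B = transpose_mat B" using p assms unfolding psd_on_def symmetric_on_def by (intro eq_matI) auto
  moreover have "0 \<le> v \<bullet> (B *\<^sub>v v)" if "v \<in> carrier_vec n" for v
  proof -
    have "v \<bullet> (B *\<^sub>v v) = vinner n (\<lambda>i. v $ i) (mat_app B (\<lambda>i. v $ i))"
      using assms that unfolding vinner_def mat_app_def by (simp add: scalar_prod_def atLeast0LessThan)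
    then show ?thesis using p unfolding psd_on_def by simp
  qed
  ultimately show "psd B" unfolding psd_def using assms by auto
qed

lemma psd_on_quadratic_form_zero:
  assumes p: "psd_on n B" and v: "vinner n v (mat_app B v) = 0"
  shows "\<forall>t<n. mat_app B v t = 0"
proof -
  have S: "symmetric_on n B" using p unfolding psd_on_def by auto
  define u where "u = mat_app B v"
  define a where "a = sqnorm n u"
  define b where "b = vinner n u (mat_app B u)"
  have b0: "b \<ge> 0" using p unfolding psd_on_def b_def by auto
  have key: "0 \<le> 2 * s * a + s * s * b" for s
  proof -
    have "0 \<le> vinner n (\<lambda>t. v t + s * u t) (mat_app B (\<lambda>t. v t + s * u t))" using p unfolding psd_on_def by auto
    also have "\<dots> = vinner n v (mat_app B v) + s * vinner n v (mat_app B u) + s * vinner n u (mat_app B v) + s * s * vinner n u (mat_app B u)"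
      unfolding mat_app_add_scale vinner_add_left vinner_add_right vinner_scale_left vinner_scale_right by (simp add: algebra_simps)
    also have "vinner n v (mat_app B u) = a" unfolding a_def u_def by (simp add: symmetric_on_vinner[OF S])
    also have "vinner n u (mat_app B v) = a" unfolding a_def u_def ..
    finally show ?thesis using v unfolding b_def by (simp add: algebra_simps)
  qed
  have "a = 0"
  proof -
    define s where "s = - a / (b + 1)"
    have "0 \<le> 2 * s * a + s * s * b" by (rule key)
    then have "0 \<le> (2 * s * a + s * s * b) * (b + 1)^2" using b0 by simp
    also have "(2 * s * a + s * s * b) * (b + 1)^2 = - a * a * (b + 2)"
    proof -
      have sb: "s * (b + 1) = - a" unfolding s_def using b0 by simp
      have "(2 * s * a + s * s * b) * (b + 1)^2 = 2 * a * (b + 1) * (s * (b + 1)) + b * (s * (b + 1)) * (s * (b + 1))"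
        by (simp add: algebra_simps power2_eq_square)
      also have "\<dots> = - a * a * (b + 2)" unfolding sb by (simp add: algebra_simps)
      finally show ?thesis .
    qed
    finally have "a * a * (b + 2) \<le> 0" by simp
    then have "a * a \<le> 0" using b0 by (simp add: mult_le_0_iff)
    then show ?thesis by (metis mult_le_0_iff not_square_less_zero order_antisym_conv zero_le_square mult_eq_0_iff)
  qed
  then show ?thesis unfolding a_def u_def using sqnorm_eq_0_iff by auto
qed

lemma entries_zero_if_annihilates_basis:
  assumes S: "symmetric_on n D" and w: "orthonormal n n w" and ev: "\<forall>i<n. \<forall>t<n. mat_app D (w i) t = 0"
  shows "\<forall>a<n. \<forall>b<n. D $$ (a, b) = 0"
proof (intro allI impI)
  fix a b assume ab: "a < n" "b < n"
  have dc: "dim_col D = n" using S unfolding symmetric_on_def by auto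
  define e where "e (s::nat) = (if s = b then 1 else (0::real))" for s
  have "D $$ (a, b) = mat_app D e a" unfolding mat_app_def dc e_def using ab
    by (simp add: if_distrib[of "\<lambda>z. _ * z"] sum.delta' cong: if_cong)
  also have "mat_app D e = mat_app D (lin_comb n (\<lambda>i. vinner n (w i) e) w)"
    by (rule mat_app_cong[OF dc]) (rule orthonormal_basis_expansion[OF w])
  also have "mat_app D (lin_comb n (\<lambda>i. vinner n (w i) e) w) = lin_comb n (\<lambda>i. vinner n (w i) e) (\<lambda>i. mat_app D (w i))"
    by (rule mat_app_lin_comb)
  also have "\<dots> a = 0" unfolding lin_comb_def using ev ab by simp
  finally show "D $$ (a, b) = 0" .
qed

lemma psd_square_root_unique:
  assumes B: "B \<in> carrier_mat n n" and C: "C \<in> carrier_mat n n"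
    and pB: "psd_on n B" and pC: "psd_on n C" and BC: "B * B = C * C"
  shows "B = C"
proof -
  define D where "D = mat n n (\<lambda>(i, j). B $$ (i, j) - C $$ (i, j))"
  have SB: "symmetric_on n B" and SC: "symmetric_on n C" using pB pC unfolding psd_on_def by auto
  have SD: "symmetric_on n D" unfolding symmetric_on_def D_def using SB SC unfolding symmetric_on_def by auto
  have mvD: "mat_app D x t = mat_app B x t - mat_app C x t" if "t < n" for x t
    unfolding mat_app_def D_def using B C that by (simp add: left_diff_distrib sum_subtractf)
  obtain w mu where w: "orthonormal n n w" "\<forall>i<n. \<forall>t<n. mat_app D (w i) t = mu i * w i t"
    using spectral_theorem[OF SD] by blast
  have BB: "vinner n v (mat_app B (mat_app B v)) = vinner n v (mat_app C (mat_app C v))" for v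
  proof -
    have "vinner n v (mat_app B (mat_app B v)) = vinner n v (mat_app (B * B) v)" by (rule vinner_cong) (use mat_app_mult[OF B B] in auto)
    also have "\<dots> = vinner n v (mat_app (C * C) v)" using BC by simp
    also have "\<dots> = vinner n v (mat_app C (mat_app C v))" by (rule vinner_cong) (use mat_app_mult[OF C C] in auto)
    finally show ?thesis .
  qed
  have mu0: "mu i = 0" if i: "i < n" for i
  proof (rule ccontr)
    assume nz: "mu i \<noteq> 0"
    define v where "v = w i"
    have Bv: "\<forall>t<n. mat_app B v t = mat_app C v t + mu i * v t"
    proof (intro allI impI)
      fix t assume t: "t < n"
      have "mat_app D v t = mu i * v t" using w(2) i t unfolding v_def by auto
      moreover have "mat_app D v t = mat_app B v t - mat_app C v t" by (rule mvD[OF t])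
      ultimately show "mat_app B v t = mat_app C v t + mu i * v t" by simp
    qed
    have e1: "sqnorm n (mat_app B v) = vinner n (mat_app C v) (mat_app B v) + mu i * vinner n v (mat_app B v)"
    proof -
      have "sqnorm n (mat_app B v) = vinner n (\<lambda>t. mat_app C v t + mu i * v t) (mat_app B v)" by (rule vinner_cong) (use Bv in auto)
      then show ?thesis unfolding vinner_add_left vinner_scale_left .
    qed
    have e2: "sqnorm n (mat_app C v) = vinner n (mat_app C v) (mat_app B v) - mu i * vinner n v (mat_app C v)"
    proof -
      have "sqnorm n (mat_app C v) = vinner n (mat_app C v) (\<lambda>t. mat_app B v t - mu i * v t)" by (rule vinner_cong) (use Bv in auto)
      then show ?thesis unfolding vinner_diff_right vinner_scale_right by (simp add: vinner_commute)
    qed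
    have "sqnorm n (mat_app B v) = sqnorm n (mat_app C v)"
      using BB[of v] symmetric_on_vinner[OF SB, of v "mat_app B v"] symmetric_on_vinner[OF SC, of v "mat_app C v"] by simp
    with e1 e2 have "mu i * (vinner n v (mat_app B v) + vinner n v (mat_app C v)) = 0" by (simp add: algebra_simps)
    with nz have "vinner n v (mat_app B v) + vinner n v (mat_app C v) = 0" by simp
    moreover have "vinner n v (mat_app B v) \<ge> 0" "vinner n v (mat_app C v) \<ge> 0" using pB pC unfolding psd_on_def by auto
    ultimately have "vinner n v (mat_app B v) = 0" "vinner n v (mat_app C v) = 0" by linarith+
    then have "\<forall>t<n. mat_app B v t = 0" "\<forall>t<n. mat_app C v t = 0" using psd_on_quadratic_form_zero pB pC by blast+
    then have "\<forall>t<n. mu i * v t = 0" using Bv by auto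
    then have "\<forall>t<n. v t = 0" using nz by simp
    then have "sqnorm n v = 0" using sqnorm_eq_0_iff by auto
    moreover have "sqnorm n v = 1" using w(1) i unfolding orthonormal_def v_def by auto
    ultimately show False by simp
  qed
  have "\<forall>a<n. \<forall>b<n. D $$ (a, b) = 0" by (rule entries_zero_if_annihilates_basis[OF SD w(1)]) (use w(2) mu0 in auto)
  then show ?thesis using B C unfolding D_def by (intro eq_matI) auto
qed

section \<open>The trace norm and the spectral norm\<close>

definition frob_inner :: "real mat \<Rightarrow> real mat \<Rightarrow> real" where
  "frob_inner A B = (\<Sum>i<dim_row A. \<Sum>j<dim_col A. A $$ (i, j) * B $$ (i, j))"

lemma frob_inner_mult_left:
  assumes L: "L \<in> carrier_mat m k" and X: "X \<in> carrier_mat k n" and Y: "Y \<in> carrier_mat m n"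
  shows "frob_inner (L * X) Y = frob_inner X (transpose_mat L * Y)"
proof -
  have LT: "transpose_mat L \<in> carrier_mat k m" using L by simp
  have "frob_inner (L * X) Y = (\<Sum>a<m. \<Sum>b<n. (\<Sum>c<k. L $$ (a, c) * X $$ (c, b)) * Y $$ (a, b))"
    unfolding frob_inner_def using X L by (simp add: index_mult_mat_sum[OF L X] del: index_mult_mat(1))
  also have "\<dots> = (\<Sum>a<m. \<Sum>b<n. \<Sum>c<k. X $$ (c, b) * (L $$ (a, c) * Y $$ (a, b)))"
    by (simp add: sum_distrib_left sum_distrib_right ac_simps)
  also have "\<dots> = (\<Sum>a<m. \<Sum>c<k. \<Sum>b<n. X $$ (c, b) * (L $$ (a, c) * Y $$ (a, b)))"
    by (rule sum.cong[OF refl], rule sum.swap)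
  also have "\<dots> = (\<Sum>c<k. \<Sum>a<m. \<Sum>b<n. X $$ (c, b) * (L $$ (a, c) * Y $$ (a, b)))"
    by (rule sum.swap)
  also have "\<dots> = (\<Sum>c<k. \<Sum>b<n. \<Sum>a<m. X $$ (c, b) * (L $$ (a, c) * Y $$ (a, b)))"
    by (rule sum.cong[OF refl], rule sum.swap)
  also have "\<dots> = frob_inner X (transpose_mat L * Y)"
    unfolding frob_inner_def using X L Y by (simp add: index_mult_mat_sum[OF LT Y] sum_distrib_left del: index_mult_mat(1))
  finally show ?thesis .
qed

lemma frob_inner_mult_right:
  assumes X: "X \<in> carrier_mat m k" and R: "R \<in> carrier_mat k n" and Y: "Y \<in> carrier_mat m n"
  shows "frob_inner (X * R) Y = frob_inner X (Y * transpose_mat R)"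
proof -
  have RT: "transpose_mat R \<in> carrier_mat n k" using R by simp
  have "frob_inner (X * R) Y = (\<Sum>a<m. \<Sum>b<n. (\<Sum>d<k. X $$ (a, d) * R $$ (d, b)) * Y $$ (a, b))"
    unfolding frob_inner_def using X R by (simp add: index_mult_mat_sum[OF X R] del: index_mult_mat(1))
  also have "\<dots> = (\<Sum>a<m. \<Sum>b<n. \<Sum>d<k. X $$ (a, d) * (Y $$ (a, b) * R $$ (d, b)))"
    by (simp add: sum_distrib_left sum_distrib_right ac_simps)
  also have "\<dots> = (\<Sum>a<m. \<Sum>d<k. \<Sum>b<n. X $$ (a, d) * (Y $$ (a, b) * R $$ (d, b)))"
    by (rule sum.cong[OF refl], rule sum.swap)
  also have "\<dots> = frob_inner X (Y * transpose_mat R)"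
    unfolding frob_inner_def using X R Y by (simp add: index_mult_mat_sum[OF Y RT] sum_distrib_left del: index_mult_mat(1))
  finally show ?thesis .
qed

lemma frob_inner_add_right: "X \<in> carrier_mat m n \<Longrightarrow> Y \<in> carrier_mat m n \<Longrightarrow> C \<in> carrier_mat m n \<Longrightarrow> frob_inner C (X + Y) = frob_inner C X + frob_inner C Y"
  unfolding frob_inner_def by (simp add: distrib_left sum.distrib)

lemma frob_inner_add_left: "X \<in> carrier_mat m n \<Longrightarrow> Y \<in> carrier_mat m n \<Longrightarrow> frob_inner (X + Y) C = frob_inner X C + frob_inner Y C"
  unfolding frob_inner_def by (simp add: distrib_right sum.distrib)

lemma frob_inner_commute: "X \<in> carrier_mat m n \<Longrightarrow> Y \<in> carrier_mat m n \<Longrightarrow> frob_inner X Y = frob_inner Y X"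
  unfolding frob_inner_def by (simp add: mult.commute)

lemma mat_entry_expansion:
  assumes v: "orthonormal n n v" and dc: "dim_col A = n" and b: "b < n"
  shows "A $$ (a, b) = (\<Sum>i<n. mat_app A (v i) a * v i b)"
proof -
  define e where "e (s::nat) = (if s = b then 1 else (0::real))" for s
  have "A $$ (a, b) = mat_app A e a" unfolding mat_app_def dc e_def using b
    by (simp add: if_distrib[of "\<lambda>z. _ * z"] sum.delta' cong: if_cong)
  also have "mat_app A e = mat_app A (lin_comb n (\<lambda>i. vinner n (v i) e) v)"
    by (rule mat_app_cong[OF dc]) (rule orthonormal_basis_expansion[OF v])
  also have "\<dots> = lin_comb n (\<lambda>i. vinner n (v i) e) (\<lambda>i. mat_app A (v i))" by (rule mat_app_lin_comb)
  also have "(\<lambda>i. vinner n (v i) e) = (\<lambda>i. v i b)" unfolding vinner_def e_def using b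
    by (auto simp: if_distrib[of "\<lambda>z. _ * z"] sum.delta' cong: if_cong)
  finally show ?thesis unfolding lin_comb_def by (simp add: mult.commute)
qed

lemma frob_inner_orthonormal_expansion:
  assumes v: "orthonormal n n v" and A: "A \<in> carrier_mat m n" and C: "C \<in> carrier_mat m n"
  shows "frob_inner A C = (\<Sum>i<n. vinner m (mat_app A (v i)) (mat_app C (v i)))"
proof -
  have "frob_inner A C = (\<Sum>a<m. \<Sum>b<n. (\<Sum>i<n. mat_app A (v i) a * v i b) * C $$ (a, b))"
    unfolding frob_inner_def using A mat_entry_expansion[OF v] by (intro sum.cong refl) auto
  also have "\<dots> = (\<Sum>a<m. \<Sum>b<n. \<Sum>i<n. mat_app A (v i) a * (C $$ (a, b) * v i b))"
    by (simp add: sum_distrib_left sum_distrib_right ac_simps)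
  also have "\<dots> = (\<Sum>a<m. \<Sum>i<n. \<Sum>b<n. mat_app A (v i) a * (C $$ (a, b) * v i b))"
    by (rule sum.cong[OF refl], rule sum.swap)
  also have "\<dots> = (\<Sum>a<m. \<Sum>i<n. mat_app A (v i) a * mat_app C (v i) a)"
    using C unfolding mat_app_def by (simp add: sum_distrib_left)
  also have "\<dots> = (\<Sum>i<n. \<Sum>a<m. mat_app A (v i) a * mat_app C (v i) a)" by (rule sum.swap)
  finally show ?thesis unfolding vinner_def .
qed

lemma index_AtA:
  assumes A: "A \<in> carrier_mat m n" and "i < n" "j < n"
  shows "(transpose_mat A * A) $$ (i, j) = (\<Sum>l<m. A $$ (l, i) * A $$ (l, j))"
  using assms by (auto simp: scalar_prod_def atLeast0LessThan intro!: sum.cong)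

lemma vinner_AtA:
  assumes A: "A \<in> carrier_mat m n"
  shows "vinner n x (mat_app (transpose_mat A * A) y) = vinner m (mat_app A x) (mat_app A y)"
proof -
  have "vinner n x (mat_app (transpose_mat A * A) y) = (\<Sum>i<n. x i * (\<Sum>j<n. (\<Sum>l<m. A $$ (l, i) * A $$ (l, j)) * y j))"
    unfolding vinner_def mat_app_def using A by (intro sum.cong refl) (simp del: index_mult_mat(1) add: index_AtA[OF A])
  also have "\<dots> = (\<Sum>i<n. \<Sum>j<n. \<Sum>l<m. x i * A $$ (l, i) * (A $$ (l, j) * y j))"
    by (simp add: sum_distrib_left sum_distrib_right ac_simps)
  also have "\<dots> = (\<Sum>i<n. \<Sum>l<m. \<Sum>j<n. x i * A $$ (l, i) * (A $$ (l, j) * y j))"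
    by (rule sum.cong[OF refl], rule sum.swap)
  also have "\<dots> = (\<Sum>l<m. \<Sum>i<n. \<Sum>j<n. x i * A $$ (l, i) * (A $$ (l, j) * y j))"
    by (rule sum.swap)
  also have "\<dots> = vinner m (mat_app A x) (mat_app A y)"
    unfolding vinner_def mat_app_def using A by (simp add: sum_product ac_simps)
  finally show ?thesis .
qed

lemma trace_norm_eq_mtrace:
  assumes A: "A \<in> carrier_mat m n" and B: "B \<in> carrier_mat n n" "psd_on n B"
    and BB: "B * B = transpose_mat A * A"
  shows "trace_norm A = mtrace B"
proof -
  have "(THE B. B \<in> carrier_mat (dim_col A) (dim_col A) \<and> psd B \<and> B * B = transpose_mat A * A) = B"
  proof (rule the_equality)
    show "B \<in> carrier_mat (dim_col A) (dim_col A) \<and> psd B \<and> B * B = transpose_mat A * A"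
      using A B BB psd_iff_psd_on[OF B(1)] by auto
    fix B' assume B': "B' \<in> carrier_mat (dim_col A) (dim_col A) \<and> psd B' \<and> B' * B' = transpose_mat A * A"
    then have B'c: "B' \<in> carrier_mat n n" using A by auto
    show "B' = B"
      by (rule psd_square_root_unique[OF B'c B(1)]) (use B' B BB psd_iff_psd_on[OF B'c] in auto)
  qed
  then show ?thesis unfolding trace_norm_def by simp
qed

lemma psd_sqrt_exists:
  assumes v: "orthonormal n n v" and mu: "\<forall>i<n. 0 \<le> mu i"
    and M: "M \<in> carrier_mat n n" and ev: "\<forall>i<n. \<forall>t<n. mat_app M (v i) t = mu i * v i t"
  shows "\<exists>B \<in> carrier_mat n n. psd_on n B \<and> B * B = M \<and> mtrace B = (\<Sum>i<n. sqrt (mu i))"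
proof -
  define B where "B = mat n n (\<lambda>(a, b). \<Sum>i<n. sqrt (mu i) * v i a * v i b)"
  have Bc: "B \<in> carrier_mat n n" unfolding B_def by simp
  have SB: "symmetric_on n B" unfolding symmetric_on_def B_def by (auto simp: ac_simps)
  have mvB: "\<forall>a<n. mat_app B x a = lin_comb n (\<lambda>i. sqrt (mu i) * vinner n (v i) x) v a" for x
  proof (intro allI impI)
    fix a assume a: "a < n"
    have "mat_app B x a = (\<Sum>b<n. \<Sum>i<n. sqrt (mu i) * v i a * (v i b * x b))"
      unfolding mat_app_def using Bc a by (simp add: B_def sum_distrib_left sum_distrib_right ac_simps)
    also have "\<dots> = lin_comb n (\<lambda>i. sqrt (mu i) * vinner n (v i) x) v a"
      unfolding lin_comb_def vinner_def by (subst sum.swap) (simp add: sum_distrib_left ac_simps)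
    finally show "mat_app B x a = lin_comb n (\<lambda>i. sqrt (mu i) * vinner n (v i) x) v a" .
  qed
  have "0 \<le> vinner n x (mat_app B x)" for x
  proof -
    have "vinner n x (mat_app B x) = vinner n x (lin_comb n (\<lambda>i. sqrt (mu i) * vinner n (v i) x) v)"
      by (rule vinner_cong) (use mvB in auto)
    also have "\<dots> = (\<Sum>i<n. sqrt (mu i) * (vinner n (v i) x * vinner n (v i) x))"
      unfolding vinner_lin_comb_right by (simp add: vinner_commute ac_simps)
    also have "\<dots> \<ge> 0" using mu by (intro sum_nonneg) auto
    finally show ?thesis .
  qed
  then have pB: "psd_on n B" using SB unfolding psd_on_def by auto
  have BB: "B * B = M"
  proof (rule eq_matI)
    fix a b assume "a < dim_row M" "b < dim_col M"
    then have a: "a < n" and b: "b < n" using M by auto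
    have vB: "vinner n (v i) (\<lambda>c. B $$ (c, b)) = sqrt (mu i) * v i b" if "i < n" for i
    proof -
      have "vinner n (v i) (\<lambda>c. B $$ (c, b)) = vinner n (v i) (lin_comb n (\<lambda>j. sqrt (mu j) * v j b) v)"
        by (rule vinner_cong) (use b in \<open>auto simp: B_def lin_comb_def ac_simps\<close>)
      then show ?thesis using orthonormal_vinner_lin_comb[OF v that] by simp
    qed
    have "(B * B) $$ (a, b) = mat_app B (\<lambda>c. B $$ (c, b)) a"
      unfolding mat_app_def using Bc a b by (simp add: index_mult_mat_sum[OF Bc Bc a b])
    also have "\<dots> = (\<Sum>i<n. mu i * v i a * v i b)"
      using mvB a vB mu unfolding lin_comb_def by (auto intro!: sum.cong simp: ac_simps)
    also have "\<dots> = M $$ (a, b)"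
      using mat_entry_expansion[OF v _ b, of M a] M ev a by simp
    finally show "(B * B) $$ (a, b) = M $$ (a, b)" .
  qed (use Bc M in auto)
  have "mtrace B = (\<Sum>i<n. sqrt (mu i) * sqnorm n (v i))"
    unfolding mtrace_def B_def vinner_def by (simp add: sum_distrib_left ac_simps) (rule sum.swap)
  also have "\<dots> = (\<Sum>i<n. sqrt (mu i))" using v unfolding orthonormal_def by simp
  finally show ?thesis using Bc pB BB by blast
qed

lemma trace_norm_singular_values:
  assumes A: "A \<in> carrier_mat m n"
  shows "\<exists>v mu. orthonormal n n v \<and> (\<forall>i<n. 0 \<le> mu i) \<and>
     (\<forall>i<n. \<forall>j<n. vinner m (mat_app A (v i)) (mat_app A (v j)) = (if i = j then mu i else 0)) \<and>
     trace_norm A = (\<Sum>i<n. sqrt (mu i))"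
proof -
  define M where "M = transpose_mat A * A"
  have Mc: "M \<in> carrier_mat n n" using A unfolding M_def by simp
  have SM: "symmetric_on n M" unfolding symmetric_on_def using Mc A unfolding M_def
    by (auto simp del: index_mult_mat(1) simp add: index_AtA[OF A] mult.commute)
  obtain v mu where v: "orthonormal n n v" "\<forall>i<n. \<forall>t<n. mat_app M (v i) t = mu i * v i t"
    using spectral_theorem[OF SM] by blast
  have ipA: "vinner m (mat_app A (v i)) (mat_app A (v j)) = (if i = j then mu i else 0)" if "i < n" "j < n" for i j
  proof -
    have "vinner m (mat_app A (v i)) (mat_app A (v j)) = vinner n (v i) (mat_app M (v j))"
      unfolding M_def by (simp add: vinner_AtA[OF A])
    also have "\<dots> = vinner n (v i) (\<lambda>t. mu j * v j t)" by (rule vinner_cong) (use v(2) that in auto)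
    finally show ?thesis
      unfolding vinner_scale_right using v(1) that unfolding orthonormal_def by auto
  qed
  have mu0: "\<forall>i<n. 0 \<le> mu i" using ipA sqnorm_nonneg by metis
  obtain B where "B \<in> carrier_mat n n" "psd_on n B" "B * B = M" "mtrace B = (\<Sum>i<n. sqrt (mu i))"
    using psd_sqrt_exists[OF v(1) mu0 Mc v(2)] by blast
  then show ?thesis using trace_norm_eq_mtrace[OF A] v(1) mu0 ipA unfolding M_def by metis
qed

lemma frob_inner_le_trace_norm:
  assumes A: "A \<in> carrier_mat m n" and C: "C \<in> carrier_mat m n" and s: "0 \<le> s"
    and Cb: "op_norm_le m n C s"
  shows "frob_inner A C \<le> trace_norm A * s"
proof -
  obtain v mu where v: "orthonormal n n v" "\<forall>i<n. 0 \<le> mu i"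
     "\<forall>i<n. \<forall>j<n. vinner m (mat_app A (v i)) (mat_app A (v j)) = (if i = j then mu i else 0)"
     "trace_norm A = (\<Sum>i<n. sqrt (mu i))"
    using trace_norm_singular_values[OF A] by blast
  have trm: "vinner m (mat_app A (v i)) (mat_app C (v i)) \<le> sqrt (mu i) * s" if i: "i < n" for i
  proof -
    have "(vinner m (mat_app A (v i)) (mat_app C (v i)))\<^sup>2 \<le> sqnorm m (mat_app A (v i)) * sqnorm m (mat_app C (v i))"
      by (rule vinner_cauchy_schwarz)
    also have "\<dots> \<le> mu i * (s\<^sup>2 * 1)"
    proof -
      have "sqnorm m (mat_app C (v i)) \<le> s\<^sup>2 * sqnorm n (v i)" using Cb by auto
      also have "sqnorm n (v i) = 1" using v(1) i unfolding orthonormal_def by auto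
      finally show ?thesis using v(2,3) i by (simp add: mult_left_mono)
    qed
    finally have "(vinner m (mat_app A (v i)) (mat_app C (v i)))\<^sup>2 \<le> (sqrt (mu i) * s)\<^sup>2"
      using v(2) i s by (simp add: power_mult_distrib)
    then show ?thesis by (rule power2_le_imp_le) (use v(2) i s in auto)
  qed
  have "frob_inner A C = (\<Sum>i<n. vinner m (mat_app A (v i)) (mat_app C (v i)))" by (rule frob_inner_orthonormal_expansion[OF v(1) A C])
  also have "\<dots> \<le> (\<Sum>i<n. sqrt (mu i) * s)" by (intro sum_mono trm) auto
  also have "\<dots> = trace_norm A * s" using v(4) by (simp add: sum_distrib_right)
  finally show ?thesis .
qed

lemma trace_norm_nonneg:
  assumes A: "A \<in> carrier_mat m n"
  shows "0 \<le> trace_norm A"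
proof -
  obtain v mu where v: "\<forall>i<n. 0 \<le> mu i" "trace_norm A = (\<Sum>i<n. sqrt (mu i))"
    using trace_norm_singular_values[OF A] by blast
  then show ?thesis by (auto intro: sum_nonneg)
qed

lemma orthogonal_lin_comb_vinner:
  assumes "\<forall>j<p. \<forall>k<p. vinner n (u j) (u k) = (if j = k then d j else 0)"
  shows "sqnorm n (lin_comb p c u) = (\<Sum>j<p. c j * c j * d j)"
proof -
  have "sqnorm n (lin_comb p c u) = (\<Sum>j<p. c j * (\<Sum>k<p. c k * vinner n (u k) (u j)))"
    unfolding vinner_lin_comb_left vinner_lin_comb_right ..
  also have "\<dots> = (\<Sum>j<p. c j * (c j * d j))"
  proof (intro sum.cong refl)
    fix j assume "j \<in> {..<p}"
    then have "(\<Sum>k<p. c k * vinner n (u k) (u j)) = (\<Sum>k<p. if k = j then c j * d j else 0)"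
      using assms by (intro sum.cong) auto
    also have "\<dots> = c j * d j" using \<open>j \<in> {..<p}\<close> by (simp add: sum.delta')
    finally show "c j * (\<Sum>k<p. c k * vinner n (u k) (u j)) = c j * (c j * d j)" by simp
  qed
  finally show ?thesis by (simp add: ac_simps)
qed

lemma mat_app_outer_sum:
  assumes "a < m"
  shows "mat_app (mat m n (\<lambda>(a, b). \<Sum>j<p. u j a * v j b)) x a = lin_comb p (\<lambda>j. vinner n (v j) x) u a"
proof -
  have "mat_app (mat m n (\<lambda>(a, b). \<Sum>j<p. u j a * v j b)) x a = (\<Sum>b<n. \<Sum>j<p. u j a * (v j b * x b))"
    unfolding mat_app_def using assms by (simp add: sum_distrib_left sum_distrib_right ac_simps)
  also have "\<dots> = lin_comb p (\<lambda>j. vinner n (v j) x) u a"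
    unfolding lin_comb_def vinner_def by (subst sum.swap) (simp add: sum_distrib_left ac_simps)
  finally show ?thesis .
qed

lemma outer_sum_contraction:
  assumes v: "orthonormal n p v" and u: "\<forall>j<p. \<forall>k<p. vinner m (u j) (u k) = (if j = k then d j else 0)"
    and d: "\<forall>j<p. d j \<le> 1"
  defines "C \<equiv> mat m n (\<lambda>(a, b). \<Sum>j<p. u j a * v j b)"
  shows "sqnorm m (mat_app C x) \<le> sqnorm n x"
proof -
  have "sqnorm m (mat_app C x)
      = sqnorm m (lin_comb p (\<lambda>j. vinner n (v j) x) u)"
    unfolding C_def by (rule vinner_cong) (simp_all add: mat_app_outer_sum)
  also have "\<dots> = (\<Sum>j<p. vinner n (v j) x * vinner n (v j) x * d j)"
    by (rule orthogonal_lin_comb_vinner[OF u])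
  also have "\<dots> \<le> (\<Sum>j<p. (vinner n (v j) x)\<^sup>2)"
    using d by (intro sum_mono) (simp add: power2_eq_square mult_left_le)
  also have "\<dots> \<le> sqnorm n x" by (rule bessel_inequality[OF v])
  finally show ?thesis .
qed

text \<open>The trace norm is attained at \<open>C = \<Sum>\<^sub>i u\<^sub>i v\<^sub>i\<^sup>T\<close>, where the \<open>u\<^sub>i\<close> are the normalized
  images \<open>A v\<^sub>i\<close> (zero where \<open>A v\<^sub>i = 0\<close>).\<close>

lemma trace_norm_attained:
  assumes A: "A \<in> carrier_mat m n"
  shows "\<exists>C \<in> carrier_mat m n. (contraction m n C) \<and> frob_inner A C = trace_norm A"
proof -
  obtain v mu where v: "orthonormal n n v" "\<forall>i<n. 0 \<le> mu i"
     "\<forall>i<n. \<forall>j<n. vinner m (mat_app A (v i)) (mat_app A (v j)) = (if i = j then mu i else 0)"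
     "trace_norm A = (\<Sum>i<n. sqrt (mu i))"
    using trace_norm_singular_values[OF A] by blast
  define u where "u j = (if mu j > 0 then (\<lambda>a. mat_app A (v j) a / sqrt (mu j)) else (\<lambda>_. 0))" for j
  have uo: "\<forall>j<n. \<forall>k<n. vinner m (u j) (u k) = (if j = k then (if mu j > 0 then 1 else 0) else 0)"
  proof (intro allI impI)
    fix j k assume jk: "j < n" "k < n"
    show "vinner m (u j) (u k) = (if j = k then (if mu j > 0 then 1 else 0) else 0)"
    proof (cases "mu j > 0 \<and> mu k > 0")
      case True
      have "vinner m (u j) (u k) = vinner m (mat_app A (v j)) (mat_app A (v k)) / (sqrt (mu j) * sqrt (mu k))"
        using True unfolding u_def vinner_def by (simp add: sum_divide_distrib)
      also have "\<dots> = (if j = k then (if mu j > 0 then 1 else 0) else 0)"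
        using v(3) jk True by (auto simp: real_sqrt_mult[symmetric])
      finally show ?thesis .
    next
      case False
      then have "vinner m (u j) (u k) = 0" unfolding u_def vinner_def by auto
      then show ?thesis using False by auto
    qed
  qed
  define C where "C = mat m n (\<lambda>(a, b). \<Sum>j<n. u j a * v j b)"
  have Cc: "C \<in> carrier_mat m n" unfolding C_def by simp
  have Cb: "sqnorm m (mat_app C x) \<le> sqnorm n x" for x
    unfolding C_def by (rule outer_sum_contraction[OF v(1) uo]) auto
  have mvC: "\<forall>a<m. mat_app C x a = lin_comb n (\<lambda>j. vinner n (v j) x) u a" for x
    unfolding C_def by (simp add: mat_app_outer_sum)
  have "frob_inner A C = (\<Sum>i<n. vinner m (mat_app A (v i)) (mat_app C (v i)))" by (rule frob_inner_orthonormal_expansion[OF v(1) A Cc])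
  also have "\<dots> = (\<Sum>i<n. sqrt (mu i))"
  proof (intro sum.cong refl)
    fix i assume "i \<in> {..<n}"
    then have i: "i < n" by simp
    have "vinner m (mat_app A (v i)) (mat_app C (v i)) = vinner m (mat_app A (v i)) (lin_comb n (\<lambda>j. vinner n (v j) (v i)) u)"
      by (rule vinner_cong) (use mvC in auto)
    also have "lin_comb n (\<lambda>j. vinner n (v j) (v i)) u = u i"
    proof (rule ext)
      fix a
      have "lin_comb n (\<lambda>j. vinner n (v j) (v i)) u a = (\<Sum>j<n. if j = i then u j a else 0)"
        unfolding lin_comb_def using v(1) i unfolding orthonormal_def by (intro sum.cong) auto
      then show "lin_comb n (\<lambda>j. vinner n (v j) (v i)) u a = u i a" using i by (simp add: sum.delta')
    qed
    also have "vinner m (mat_app A (v i)) (u i) = sqrt (mu i)"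
    proof (cases "mu i > 0")
      case True
      have "vinner m (mat_app A (v i)) (u i) = sqnorm m (mat_app A (v i)) / sqrt (mu i)"
        using True unfolding u_def vinner_def by (simp add: sum_divide_distrib)
      also have "\<dots> = mu i / sqrt (mu i)" using v(3) i by simp
      also have "\<dots> = sqrt (mu i)" using True by (simp add: real_div_sqrt)
      finally show ?thesis .
    next
      case False
      then have "mu i = 0" using v(2)[rule_format, OF i] by simp
      then show ?thesis unfolding u_def vinner_def by simp
    qed
    finally show "vinner m (mat_app A (v i)) (mat_app C (v i)) = sqrt (mu i)" .
  qed
  finally show ?thesis using Cc Cb v(4) by auto
qed

lemma op_norm_le_of_unit_ball:
  assumes A: "dim_col A = n" and unit: "\<And>x. sqnorm n x \<le> 1 \<Longrightarrow> sqrt (sqnorm m (mat_app A x)) \<le> s"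
  shows "op_norm_le m n A s"
proof
  fix x
  show "sqnorm m (mat_app A x) \<le> s\<^sup>2 * sqnorm n x"
  proof (cases "sqnorm n x = 0")
    case True
    then have "mat_app A x = mat_app A (\<lambda>_. 0)" by (intro mat_app_cong[OF A]) (simp add: sqnorm_eq_0_iff)
    then have "sqnorm m (mat_app A x) = 0" by (simp add: mat_app_def vinner_def)
    then show ?thesis using True by simp
  next
    case False
    then have xp: "sqnorm n x > 0" using sqnorm_nonneg[of n x] by simp
    have "sqnorm n (normalize_vec n x) = 1"
      by (rule sqnorm_normalize_vec) (use False sqnorm_eq_0_iff in blast)
    then have "sqrt (sqnorm m (mat_app A (normalize_vec n x))) \<le> s" by (rule unit[OF eq_refl])
    moreover have "mat_app A (normalize_vec n x) = (\<lambda>t. mat_app A x t / sqrt (sqnorm n x))"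
      unfolding normalize_vec_def mat_app_def by (simp add: sum_divide_distrib)
    moreover have "sqnorm m (\<lambda>t. mat_app A x t / sqrt (sqnorm n x)) = sqnorm m (mat_app A x) / sqnorm n x"
      using xp unfolding vinner_def by (simp add: sum_divide_distrib)
    ultimately have q: "sqrt (sqnorm m (mat_app A x) / sqnorm n x) \<le> s" by simp
    have q0: "0 \<le> sqnorm m (mat_app A x) / sqnorm n x"
      by (rule divide_nonneg_pos[OF sqnorm_nonneg xp])
    have "sqnorm m (mat_app A x) / sqnorm n x = (sqrt (sqnorm m (mat_app A x) / sqnorm n x))\<^sup>2"
      using q0 by simp
    also have "\<dots> \<le> s\<^sup>2" using q q0 by (intro power_mono) auto
    finally show ?thesis using xp by (simp add: divide_le_eq)
  qed
qed

lemma spec_norm_bound: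
  assumes A: "A \<in> carrier_mat m n"
  shows "0 \<le> spec_norm A \<and> op_norm_le m n A (spec_norm A)"
proof -
  define F where "F = (\<Sum>i<m. \<Sum>j<n. (A $$ (i, j))\<^sup>2)"
  define S where "S = {sqrt (sqnorm m (mat_app A x)) | x. sqnorm n x \<le> 1}"
  have dA: "dim_row A = m" "dim_col A = n" using A by auto
  have sn: "spec_norm A = Sup S"
    unfolding spec_norm_def S_def vinner_def mat_app_def dA by (simp add: power2_eq_square)
  have Fb: "sqnorm m (mat_app A x) \<le> F * sqnorm n x" for x
  proof -
    have "sqnorm m (mat_app A x) = (\<Sum>i<m. (vinner n (\<lambda>j. A $$ (i, j)) x)\<^sup>2)"
      unfolding vinner_def mat_app_def dA by (simp add: power2_eq_square)
    also have "\<dots> \<le> (\<Sum>i<m. sqnorm n (\<lambda>j. A $$ (i, j)) * sqnorm n x)"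
      by (intro sum_mono vinner_cauchy_schwarz)
    also have "\<dots> = F * sqnorm n x" unfolding F_def vinner_def by (simp add: sum_distrib_right power2_eq_square)
    finally show ?thesis .
  qed
  have "bdd_above S" unfolding S_def
  proof (rule bdd_aboveI[of _ "sqrt F"])
    fix y assume "y \<in> {sqrt (sqnorm m (mat_app A x)) | x. sqnorm n x \<le> 1}"
    then obtain x where x: "y = sqrt (sqnorm m (mat_app A x))" "sqnorm n x \<le> 1" by auto
    have "0 \<le> F" unfolding F_def by (intro sum_nonneg) auto
    then have "sqnorm m (mat_app A x) \<le> F" using Fb[of x] x(2) mult_left_le[of "sqnorm n x" F] by linarith
    then show "y \<le> sqrt F" using x(1) by simp
  qed
  then have mem: "sqrt (sqnorm m (mat_app A x)) \<le> Sup S" if "sqnorm n x \<le> 1" for x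
    using that unfolding S_def by (intro cSup_upper) auto
  have "0 \<le> Sup S" using mem[of "\<lambda>_. 0"] by (simp add: mat_app_def vinner_def)
  then show ?thesis using sn op_norm_le_of_unit_ball[OF dA(2) mem] by simp
qed

lemma sum_set_distinct_nth: "distinct xs \<Longrightarrow> sum g (set xs) = (\<Sum>i<length xs. g (xs ! i))"
  by (simp add: sum.distinct_set_conv_list sum_list_sum_nth atLeast0LessThan)

lemma column_span_rank:
  assumes W: "W \<in> carrier_mat m n"
  shows "\<exists>N f. N \<le> mrank W \<and> (\<forall>b<n. in_span m N f (\<lambda>t. W $$ (t, b)))"
proof -
  interpret vec_space "TYPE(real)" m .
  obtain S where S: "maximal S (\<lambda>T. T \<subseteq> set (cols W) \<and> lin_indpt T)"
    using maximal_exists[of "(\<lambda>T. T \<subseteq> set (cols W) \<and> lin_indpt T)" "card (set (cols W))" "{}"]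
    by (meson List.finite_set card_mono empty_iff empty_subsetI finite_lin_indpt2 rev_finite_subset)
  have rk: "mrank W = card S" unfolding mrank_def using rank_card_indpt[OF _ S] W by auto
  have SW: "S \<subseteq> set (cols W)" "lin_indpt S" using S unfolding maximal_def by auto
  have Sc: "S \<subseteq> carrier_vec m" using SW(1) W cols_dim by blast
  have fS: "finite S" using SW(1) finite_subset by blast
  obtain ss where ss: "set ss = S" "distinct ss" using finite_distinct_list[OF fS] by blast
  have len: "length ss = card S" using ss distinct_card by fastforce
  define f where "f j t = ss ! j $ t" for j t
  have "in_span m (length ss) f (\<lambda>t. W $$ (t, b))" if b: "b < n" for b
  proof -
    have c: "col W b \<in> set (cols W)" using b W by (simp add: cols_def)
    have cc: "col W b \<in> carrier_vec m" by (rule col_carrier_vec[OF b W])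
    have insp: "col W b \<in> span S"
    proof (cases "col W b \<in> S")
      case True
      then show ?thesis using in_own_span[OF Sc] by auto
    next
      case False
      have "\<not> lin_indpt (S \<union> {col W b})"
      proof
        assume "lin_indpt (S \<union> {col W b})"
        then have "S \<union> {col W b} = S" using S c unfolding maximal_def by auto
        then show False using False by auto
      qed
      then show ?thesis using lin_dep_iff_in_span[OF Sc SW(2) cc False] by simp
    qed
    obtain a where a: "lincomb a S = col W b" using finite_in_span[OF fS Sc insp] by auto
    show ?thesis unfolding in_span_def
    proof (rule exI[of _ "\<lambda>j. a (ss ! j)"], intro allI impI)
      fix t assume t: "t < m"
      have "W $$ (t, b) = col W b $ t" using t b W by simp
      also have "\<dots> = (\<Sum>u\<in>S. a u * u $ t)" unfolding a[symmetric] by (rule lincomb_index[OF t Sc])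
      also have "\<dots> = (\<Sum>j<length ss. a (ss ! j) * f j t)" unfolding ss(1)[symmetric] f_def
        by (rule sum_set_distinct_nth[OF ss(2)])
      finally show "W $$ (t, b) = (\<Sum>j<length ss. a (ss ! j) * f j t)" .
    qed
  qed
  then show ?thesis using rk len by (intro exI[of _ "length ss"] exI[of _ f]) auto
qed

lemma symmetric_on_transpose: "symmetric_on n L \<Longrightarrow> transpose_mat L = L"
  unfolding symmetric_on_def by (intro eq_matI) auto

lemma frob_inner_amgm:
  assumes t: "0 < t" and X: "X \<in> carrier_mat m n" and Y: "Y \<in> carrier_mat m n"
  shows "\<bar>frob_inner X Y\<bar> \<le> (t * frob_inner X X + frob_inner Y Y / t) / 2"
proof -
  have e: "\<bar>x * y\<bar> \<le> (t * (x * x) + y * y / t) / 2" for x y :: real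
  proof -
    have "0 \<le> (t * \<bar>x\<bar> - \<bar>y\<bar>)\<^sup>2" by simp
    then have "2 * t * \<bar>x * y\<bar> \<le> t * t * (x * x) + y * y"
      by (simp add: power2_eq_square algebra_simps abs_mult)
    then show ?thesis using t by (simp add: field_simps)
  qed
  have "\<bar>frob_inner X Y\<bar> \<le> (\<Sum>a<m. \<Sum>b<n. \<bar>X $$ (a, b) * Y $$ (a, b)\<bar>)"
    unfolding frob_inner_def using X by (auto intro!: order.trans[OF sum_abs] sum_mono)
  also have "\<dots> \<le> (\<Sum>a<m. \<Sum>b<n. (t * (X $$ (a, b) * X $$ (a, b)) + Y $$ (a, b) * Y $$ (a, b) / t) / 2)"
    by (intro sum_mono e)
  also have "\<dots> = (t * frob_inner X X + frob_inner Y Y / t) / 2"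
    unfolding frob_inner_def using X Y by (simp add: sum.distrib sum_distrib_left sum_divide_distrib add_divide_distrib)
  finally show ?thesis .
qed

section \<open>Orthogonal projections\<close>

definition proj_mat :: "nat \<Rightarrow> nat \<Rightarrow> (nat \<Rightarrow> nat \<Rightarrow> real) \<Rightarrow> real mat" where
  "proj_mat m p a = mat m m (\<lambda>(s, t). \<Sum>i<p. a i s * a i t)"

lemma proj_mat_carrier: "proj_mat m p a \<in> carrier_mat m m" unfolding proj_mat_def by simp

lemma proj_mat_symmetric: "symmetric_on m (proj_mat m p a)" unfolding symmetric_on_def proj_mat_def by (auto simp: ac_simps)

lemma mat_app_proj_mat: "t < m \<Longrightarrow> mat_app (proj_mat m p a) x t = lin_comb p (\<lambda>i. vinner m (a i) x) a t"
proof -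
  assume t: "t < m"
  have "mat_app (proj_mat m p a) x t = (\<Sum>s<m. (\<Sum>i<p. a i t * a i s) * x s)"
    unfolding mat_app_def proj_mat_def using t by simp
  also have "\<dots> = (\<Sum>s<m. \<Sum>i<p. a i t * (a i s * x s))" by (simp add: sum_distrib_left sum_distrib_right ac_simps)
  also have "\<dots> = (\<Sum>i<p. \<Sum>s<m. a i t * (a i s * x s))" by (rule sum.swap)
  also have "\<dots> = lin_comb p (\<lambda>i. vinner m (a i) x) a t" unfolding lin_comb_def vinner_def by (simp add: sum_distrib_left ac_simps)
  finally show ?thesis .
qed

lemma vinner_proj_mat_self:
  assumes "orthonormal m p a"
  shows "sqnorm m (mat_app (proj_mat m p a) x) = (\<Sum>i<p. (vinner m (a i) x)\<^sup>2)"
proof -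
  have "sqnorm m (mat_app (proj_mat m p a) x) = sqnorm m (lin_comb p (\<lambda>i. vinner m (a i) x) a)"
    by (rule vinner_cong) (auto simp: mat_app_proj_mat)
  also have "\<dots> = (\<Sum>i<p. (vinner m (a i) x)\<^sup>2)" by (simp add: orthonormal_lin_comb_vinner[OF assms] power2_eq_square)
  finally show ?thesis .
qed

lemma proj_mat_orthogonal_residual:
  assumes "orthonormal m p a"
  shows "vinner m (mat_app (proj_mat m p a) u) (\<lambda>t. w t - mat_app (proj_mat m p a) w t) = 0"
proof -
  let ?P = "proj_mat m p a"
  have "vinner m (mat_app ?P u) (\<lambda>t. w t - mat_app ?P w t) = vinner m (lin_comb p (\<lambda>i. vinner m (a i) u) a) (\<lambda>t. w t - lin_comb p (\<lambda>i. vinner m (a i) w) a t)"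
    by (rule vinner_cong) (auto simp: mat_app_proj_mat)
  also have "\<dots> = 0"
  proof -
    have "(\<Sum>i<p. vinner m (a i) u * vinner m (a i) (lin_comb p (\<lambda>i. vinner m (a i) w) a)) = (\<Sum>i<p. vinner m (a i) u * vinner m (a i) w)"
      by (rule sum.cong) (simp_all add: orthonormal_vinner_lin_comb[OF assms])
    then show ?thesis unfolding vinner_diff_right orthonormal_lin_comb_vinner[OF assms] vinner_lin_comb_left by simp
  qed
  finally show ?thesis .
qed

lemma proj_mat_pythagoras:
  assumes "orthonormal m p a"
  shows "sqnorm m x = sqnorm m (mat_app (proj_mat m p a) x) +
     sqnorm m (\<lambda>t. x t - mat_app (proj_mat m p a) x t)"
proof -
  let ?P = "proj_mat m p a"
  have "sqnorm m x = sqnorm m (\<lambda>t. mat_app ?P x t + (x t - mat_app ?P x t))" by simp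
  also have "\<dots> = sqnorm m (mat_app ?P x) + 2 * vinner m (mat_app ?P x) (\<lambda>t. x t - mat_app ?P x t) +
     sqnorm m (\<lambda>t. x t - mat_app ?P x t)"
    unfolding vinner_add_left vinner_add_right by (simp add: vinner_commute)
  finally show ?thesis using proj_mat_orthogonal_residual[OF assms] by simp
qed

lemma proj_mat_fixes_span:
  assumes "orthonormal m p a" "\<forall>t<m. x t = lin_comb p c a t" "t < m"
  shows "mat_app (proj_mat m p a) x t = x t"
proof -
  have "vinner m (a i) x = c i" if "i < p" for i
  proof -
    have "vinner m (a i) x = vinner m (a i) (lin_comb p c a)" by (rule vinner_cong) (use assms in auto)
    then show ?thesis using orthonormal_vinner_lin_comb[OF assms(1) that] by simp
  qed
  then show ?thesis using assms mat_app_proj_mat[OF assms(3)] unfolding lin_comb_def by simp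
qed

lemma trace_norm_triangle:
  assumes X: "X \<in> carrier_mat m n" and Y: "Y \<in> carrier_mat m n"
  shows "trace_norm (X + Y) \<le> trace_norm X + trace_norm Y"
proof -
  have XY: "X + Y \<in> carrier_mat m n" using X Y by simp
  obtain C where C: "C \<in> carrier_mat m n" "contraction m n C"
    "frob_inner (X + Y) C = trace_norm (X + Y)" using trace_norm_attained[OF XY] by blast
  have Cb: "op_norm_le m n C 1" using C(2) by simp
  have "trace_norm (X + Y) = frob_inner X C + frob_inner Y C" using C(3) frob_inner_add_left[OF X Y] by simp
  also have "\<dots> \<le> trace_norm X * 1 + trace_norm Y * 1"
    by (intro add_mono frob_inner_le_trace_norm[OF X C(1) _ Cb] frob_inner_le_trace_norm[OF Y C(1) _ Cb]) auto
  finally show ?thesis by simp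
qed

lemma vinner_transpose:
  assumes C: "C \<in> carrier_mat m n"
  shows "vinner m y (mat_app C z) = vinner n (mat_app (transpose_mat C) y) z"
proof -
  have "vinner m y (mat_app C z) = (\<Sum>s<m. \<Sum>b<n. y s * C $$ (s, b) * z b)"
    unfolding vinner_def mat_app_def using C by (simp add: sum_distrib_left ac_simps)
  also have "\<dots> = (\<Sum>b<n. \<Sum>s<m. y s * C $$ (s, b) * z b)" by (rule sum.swap)
  also have "\<dots> = vinner n (mat_app (transpose_mat C) y) z"
    unfolding vinner_def mat_app_def using C by (simp add: sum_distrib_left sum_distrib_right ac_simps)
  finally show ?thesis .
qed

lemma transpose_contraction:
  assumes C: "C \<in> carrier_mat m n" and Cb: "contraction m n C"
  shows "sqnorm n (mat_app (transpose_mat C) y) \<le> sqnorm m y"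
proof -
  define z where "z = mat_app (transpose_mat C) y"
  have "sqnorm n z = vinner m y (mat_app C z)" unfolding z_def by (simp add: vinner_transpose[OF C])
  then have "(sqnorm n z)\<^sup>2 \<le> sqnorm m y * sqnorm m (mat_app C z)" using vinner_cauchy_schwarz[of m y "mat_app C z"] by simp
  also have "\<dots> \<le> sqnorm m y * sqnorm n z" using Cb by (simp add: mult_left_mono sqnorm_nonneg)
  finally have h: "sqnorm n z * sqnorm n z \<le> sqnorm m y * sqnorm n z" by (simp add: power2_eq_square)
  show ?thesis
  proof (cases "sqnorm n z = 0")
    case True then show ?thesis using sqnorm_nonneg[of m y] z_def by simp
  next
    case False
    then have "sqnorm n z > 0" using sqnorm_nonneg[of n z] by simp
    then show ?thesis using h z_def by simp
  qed
qed

lemma frob_mult_proj_right_le: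
  assumes X: "X \<in> carrier_mat m n" and o: "orthonormal n q bq"
    and Xb: "contraction m n X"
  shows "frob_inner (X * proj_mat n q bq) (X * proj_mat n q bq) \<le> real q"
proof -
  let ?Q = "proj_mat n q bq"
  have Q: "?Q \<in> carrier_mat n n" by (rule proj_mat_carrier)
  have XQ: "X * ?Q \<in> carrier_mat m n" using X Q by simp
  have ent: "(X * ?Q) $$ (a, b) = mat_app ?Q (\<lambda>s. X $$ (a, s)) b" if "a < m" "b < n" for a b
  proof -
    have "(X * ?Q) $$ (a, b) = (\<Sum>s<n. X $$ (a, s) * ?Q $$ (s, b))" by (rule index_mult_mat_sum[OF X Q that])
    also have "\<dots> = mat_app ?Q (\<lambda>s. X $$ (a, s)) b" unfolding mat_app_def using Q that proj_mat_symmetric[of n q bq]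
      unfolding symmetric_on_def by (auto simp: mult.commute intro!: sum.cong)
    finally show ?thesis .
  qed
  have "frob_inner (X * ?Q) (X * ?Q) = (\<Sum>a<m. sqnorm n (mat_app ?Q (\<lambda>s. X $$ (a, s))))"
  proof -
    have d: "dim_row (X * ?Q) = m" "dim_col (X * ?Q) = n" using XQ by auto
    show ?thesis unfolding frob_inner_def vinner_def d using ent by (simp del: index_mult_mat(1))
  qed
  also have "\<dots> = (\<Sum>a<m. \<Sum>j<q. (vinner n (bq j) (\<lambda>s. X $$ (a, s)))\<^sup>2)" by (simp add: vinner_proj_mat_self[OF o])
  also have "\<dots> = (\<Sum>j<q. \<Sum>a<m. (mat_app X (bq j) a)\<^sup>2)"
    by (subst sum.swap) (use X in \<open>simp add: vinner_def mat_app_def mult.commute\<close>)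
  also have "\<dots> = (\<Sum>j<q. sqnorm m (mat_app X (bq j)))" by (simp add: vinner_def power2_eq_square)
  also have "\<dots> \<le> (\<Sum>j<q. sqnorm n (bq j))" by (intro sum_mono) (use Xb in auto)
  also have "\<dots> = real q" using o unfolding orthonormal_def by simp
  finally show ?thesis .
qed

lemma frob_proj_mult_left_le:
  assumes C: "C \<in> carrier_mat m n" and o: "orthonormal m p a"
    and Cb: "contraction m n C"
  shows "frob_inner (proj_mat m p a * C) (proj_mat m p a * C) \<le> real p"
proof -
  let ?P = "proj_mat m p a"
  have P: "?P \<in> carrier_mat m m" by (rule proj_mat_carrier)
  have PC: "?P * C \<in> carrier_mat m n" using C P by simp
  have ent: "(?P * C) $$ (s, b) = mat_app ?P (\<lambda>t. C $$ (t, b)) s" if "s < m" "b < n" for s b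
    using index_mult_mat_sum[OF P C that] unfolding mat_app_def using P by simp
  have "frob_inner (?P * C) (?P * C) = (\<Sum>s<m. \<Sum>b<n. (mat_app ?P (\<lambda>t. C $$ (t, b)) s)\<^sup>2)"
  proof -
    have d: "dim_row (?P * C) = m" "dim_col (?P * C) = n" using PC by auto
    show ?thesis unfolding frob_inner_def d using ent by (simp del: index_mult_mat(1) add: power2_eq_square)
  qed
  also have "\<dots> = (\<Sum>b<n. sqnorm m (mat_app ?P (\<lambda>t. C $$ (t, b))))"
    by (subst sum.swap) (simp add: vinner_def power2_eq_square)
  also have "\<dots> = (\<Sum>b<n. \<Sum>i<p. (vinner m (a i) (\<lambda>t. C $$ (t, b)))\<^sup>2)" by (simp add: vinner_proj_mat_self[OF o])
  also have "\<dots> = (\<Sum>i<p. \<Sum>b<n. (mat_app (transpose_mat C) (a i) b)\<^sup>2)"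
    by (subst sum.swap) (use C in \<open>simp add: vinner_def mat_app_def mult.commute\<close>)
  also have "\<dots> = (\<Sum>i<p. sqnorm n (mat_app (transpose_mat C) (a i)))"
    by (simp add: vinner_def power2_eq_square)
  also have "\<dots> \<le> (\<Sum>i<p. sqnorm m (a i))" by (intro sum_mono transpose_contraction[OF C Cb])
  also have "\<dots> = real p" using o unfolding orthonormal_def by simp
  finally show ?thesis .
qed

lemma proj_mat_contraction:
  assumes "orthonormal m p a"
  shows "sqnorm m (mat_app (proj_mat m p a) u) \<le> sqnorm m u"
    "sqnorm m (\<lambda>t. u t - mat_app (proj_mat m p a) u t) \<le> sqnorm m u"
  using proj_mat_pythagoras[OF assms, of u] sqnorm_nonneg by (metis le_add_same_cancel1 le_add_same_cancel2)+

lemma proj_compl_symmetric: "symmetric_on m (1\<^sub>m m - proj_mat m p a)"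
  using proj_mat_symmetric[of m p a] proj_mat_carrier[of m p a] unfolding symmetric_on_def by (auto simp: minus_carrier_mat)

lemma mat_app_proj_compl: "t < m \<Longrightarrow> mat_app (1\<^sub>m m - proj_mat m p a) u t = u t - mat_app (proj_mat m p a) u t"
  using mat_app_minus[of "1\<^sub>m m" m m "proj_mat m p a" t u] proj_mat_carrier[of m p a] mat_app_one by auto

lemma mult_contraction:
  assumes A: "A \<in> carrier_mat a k" and B: "B \<in> carrier_mat k c"
    and Ab: "contraction a k A" and Bb: "contraction k c B"
  shows "contraction a c (A * B)"
proof
  fix x
  have "sqnorm a (mat_app (A * B) x) = sqnorm a (mat_app A (mat_app B x))"
    by (rule vinner_cong) (use mat_app_mult[OF A B] in auto)
  also have "\<dots> \<le> sqnorm k (mat_app B x)" using Ab by auto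
  also have "\<dots> \<le> sqnorm c x" using Bb by auto
  finally show "sqnorm a (mat_app (A * B) x) \<le> sqnorm c x" .
qed

section \<open>Decomposability of the trace norm\<close>

lemma proj_mat_mult_fixes_cols:
  assumes W: "W \<in> carrier_mat m n" and o: "orthonormal m p a"
    and cols: "\<forall>b<n. \<forall>t<m. W $$ (t, b) = lin_comb p (c b) a t"
  shows "proj_mat m p a * W = W"
proof (rule eq_matI)
  fix s b assume "s < dim_row W" "b < dim_col W"
  then have s: "s < m" and b: "b < n" using W by auto
  have "(proj_mat m p a * W) $$ (s, b) = (\<Sum>l<m. proj_mat m p a $$ (s, l) * W $$ (l, b))"
    by (rule index_mult_mat_sum[OF proj_mat_carrier W s b])
  also have "\<dots> = mat_app (proj_mat m p a) (\<lambda>l. W $$ (l, b)) s"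
    unfolding mat_app_def using proj_mat_carrier[of m p a] by simp
  also have "\<dots> = W $$ (s, b)" using cols b s by (intro proj_mat_fixes_span[OF o]) auto
  finally show "(proj_mat m p a * W) $$ (s, b) = W $$ (s, b)" .
qed (use W proj_mat_carrier[of m p a] in auto)

lemma mult_proj_mat_fixes_rows:
  assumes W: "W \<in> carrier_mat m n" and o: "orthonormal n q b"
    and rows: "\<forall>s<m. \<forall>l<n. W $$ (s, l) = lin_comb q (c s) b l"
  shows "W * proj_mat n q b = W"
proof (rule eq_matI)
  fix s l assume "s < dim_row W" "l < dim_col W"
  then have s: "s < m" and l: "l < n" using W by auto
  have "(W * proj_mat n q b) $$ (s, l) = (\<Sum>j<n. W $$ (s, j) * proj_mat n q b $$ (j, l))"
    by (rule index_mult_mat_sum[OF W proj_mat_carrier s l])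
  also have "\<dots> = mat_app (proj_mat n q b) (\<lambda>j. W $$ (s, j)) l"
    unfolding mat_app_def using l by (auto simp: proj_mat_def mult.commute intro!: sum.cong)
  also have "\<dots> = W $$ (s, l)" using rows s l by (intro proj_mat_fixes_span[OF o]) auto
  finally show "(W * proj_mat n q b) $$ (s, l) = W $$ (s, l)" .
qed (use W proj_mat_carrier[of n q b] in auto)

text \<open>The row space is spanned by the coordinate vectors of the rows with respect to an
  orthonormal basis of the column space.\<close>

lemma rank_projections_exist:
  assumes W: "W \<in> carrier_mat m n"
  shows "\<exists>p a q b. p \<le> mrank W \<and> q \<le> mrank W \<and> orthonormal m p a \<and> orthonormal n q b
    \<and> proj_mat m p a * W = W \<and> W * proj_mat n q b = W"
proof -
  obtain N f where Nf: "N \<le> mrank W" "\<forall>b<n. in_span m N f (\<lambda>t. W $$ (t, b))"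
    using column_span_rank[OF W] by blast
  obtain p a where pa: "p \<le> N" "orthonormal m p a"
      "\<forall>j<N. \<forall>t<m. f j t = lin_comb p (\<lambda>i. vinner m (a i) (f j)) a t"
    using gram_schmidt_exists[of N m f] by blast
  define g where "g i = (\<lambda>l. vinner m (a i) (\<lambda>t. W $$ (t, l)))" for i
  have cols: "\<forall>l<n. \<forall>t<m. W $$ (t, l) = lin_comb p (\<lambda>i. g i l) a t"
    unfolding g_def using Nf(2) by (auto intro: in_span_expansion[OF pa(2,3), rule_format])
  obtain q b where qb: "q \<le> p" "orthonormal n q b"
      "\<forall>i<p. \<forall>l<n. g i l = lin_comb q (\<lambda>j. vinner n (b j) (g i)) b l"
    using gram_schmidt_exists[of p n g] by blast
  have rows: "\<forall>s<m. \<forall>l<n. W $$ (s, l) = lin_comb q (\<lambda>j. \<Sum>i<p. a i s * vinner n (b j) (g i)) b l"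
  proof (intro allI impI)
    fix s l assume s: "s < m" and l: "l < n"
    have "W $$ (s, l) = (\<Sum>i<p. (\<Sum>j<q. vinner n (b j) (g i) * b j l) * a i s)"
      using cols qb(3) s l unfolding lin_comb_def by (simp add: mult.commute)
    also have "\<dots> = (\<Sum>j<q. \<Sum>i<p. a i s * vinner n (b j) (g i) * b j l)"
      by (subst sum.swap) (simp add: sum_distrib_left sum_distrib_right ac_simps)
    finally show "W $$ (s, l) = lin_comb q (\<lambda>j. \<Sum>i<p. a i s * vinner n (b j) (g i)) b l"
      unfolding lin_comb_def by (simp add: sum_distrib_right)
  qed
  show ?thesis
    using pa qb Nf(1) proj_mat_mult_fixes_cols[OF W pa(2) cols] mult_proj_mat_fixes_rows[OF W qb(2) rows]
    by (intro exI[of _ p] exI[of _ a] exI[of _ q] exI[of _ b]) auto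
qed

locale orthonormal_pair =
  fixes m n p q :: nat and a b :: "nat \<Rightarrow> nat \<Rightarrow> real"
  assumes orth_left: "orthonormal m p a" and orth_right: "orthonormal n q b"
begin

abbreviation "P \<equiv> proj_mat m p a"
abbreviation "Q \<equiv> proj_mat n q b"
abbreviation "P_perp \<equiv> 1\<^sub>m m - P"
abbreviation "Q_perp \<equiv> 1\<^sub>m n - Q"

lemma dim_projections [simp]: "dim_row P = m" "dim_col P = m" "dim_row Q = n" "dim_col Q = n"
  by (simp_all add: proj_mat_def)

lemma carrier_projections [simp]:
  "P \<in> carrier_mat m m" "Q \<in> carrier_mat n n" "P_perp \<in> carrier_mat m m" "Q_perp \<in> carrier_mat n n"
  by (simp_all add: proj_mat_carrier minus_carrier_mat)

lemma transpose_projections [simp]: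
  "transpose_mat P = P" "transpose_mat Q = Q" "transpose_mat P_perp = P_perp" "transpose_mat Q_perp = Q_perp"
  using symmetric_on_transpose[OF proj_mat_symmetric] symmetric_on_transpose[OF proj_compl_symmetric]
  by auto

lemma carrier_mult_projections [simp]:
  assumes "D \<in> carrier_mat m n"
  shows "P * D \<in> carrier_mat m n" "P_perp * D \<in> carrier_mat m n"
    "D * Q \<in> carrier_mat m n" "D * Q_perp \<in> carrier_mat m n"
  using assms carrier_projections by (auto intro!: mult_carrier_mat)

lemma sqnorm_mat_app_P_perp:
  "sqnorm m (mat_app P_perp u) = sqnorm m (\<lambda>t. u t - mat_app P u t)"
  by (rule vinner_cong) (auto simp: mat_app_proj_compl)

lemma contraction_projections:
  "contraction m m P"
  "contraction m m P_perp"
  using proj_mat_contraction[OF orth_left] by (simp_all add: sqnorm_mat_app_P_perp)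

text \<open>Pythagoras for \<open>P\<close> on the left and for \<open>Q\<close> on the right.\<close>

lemma contraction_block_sum:
  assumes CW: "CW \<in> carrier_mat m n" "contraction m n CW"
    and CR: "CR \<in> carrier_mat m n" "contraction m n CR"
  shows "sqnorm m (mat_app (P * CW * Q + P_perp * CR * Q_perp) x)
    \<le> 1\<^sup>2 * sqnorm n x"
proof -
  define v where "v = mat_app CW (mat_app Q x)"
  define u where "u = mat_app CR (mat_app Q_perp x)"
  have "mat_app (P * CW * Q + P_perp * CR * Q_perp) x s = mat_app P v s + (u s - mat_app P u s)"
    if s: "s < m" for s
  proof -
    have "mat_app (P * CW * Q) x s = mat_app P v s"
      unfolding v_def using CW(1) s by (simp add: mat_app_mult[of "P * CW" m n Q n] mat_app_mult[of P m m CW n])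
    moreover have "mat_app (P_perp * CR * Q_perp) x s = mat_app P_perp u s"
      unfolding u_def using CR(1) s
      by (simp add: mat_app_mult[of "P_perp * CR" m n Q_perp n] mat_app_mult[of P_perp m m CR n])
    ultimately show ?thesis
      using CW(1) CR(1) s by (simp add: mat_app_add[of _ m n] mat_app_proj_compl)
  qed
  then have "sqnorm m (mat_app (P * CW * Q + P_perp * CR * Q_perp) x)
      = sqnorm m (\<lambda>s. mat_app P v s + (u s - mat_app P u s))"
    by (intro vinner_cong) auto
  also have "\<dots> = sqnorm m (mat_app P v) + sqnorm m (mat_app P_perp u)"
    unfolding vinner_add_left vinner_add_right sqnorm_mat_app_P_perp
    using proj_mat_orthogonal_residual[OF orth_left, of v u] by (simp add: vinner_commute)
  also have "\<dots> \<le> sqnorm n (mat_app Q x) + sqnorm n (mat_app Q_perp x)"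
  proof (rule add_mono)
    show "sqnorm m (mat_app P v) \<le> sqnorm n (mat_app Q x)"
      using contraction_projections(1) CW(2) unfolding v_def by (meson order_trans)
    show "sqnorm m (mat_app P_perp u) \<le> sqnorm n (mat_app Q_perp x)"
      using contraction_projections(2) CR(2) unfolding u_def by (meson order_trans)
  qed
  also have "sqnorm n (mat_app Q_perp x) = sqnorm n (\<lambda>t. x t - mat_app Q x t)"
    by (rule vinner_cong) (auto simp: mat_app_proj_compl)
  also have "sqnorm n (mat_app Q x) + \<dots> = sqnorm n x"
    by (rule proj_mat_pythagoras[OF orth_right, symmetric])
  finally show ?thesis by simp
qed

text \<open>The dual certificate \<open>P CW Q + P_perp CR Q_perp\<close>, built from norming contractions of \<open>W\<close> and
  of \<open>P_perp D Q_perp\<close>, tests \<open>W + D\<close>; only its part \<open>P CW Q\<close> sees \<open>D\<close> uncontrolled.\<close>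

lemma trace_norm_add_ge:
  assumes W: "W \<in> carrier_mat m n" and D: "D \<in> carrier_mat m n"
    and PW: "P * W = W" and WQ: "W * Q = W"
  shows "\<exists>G \<in> carrier_mat m n. frob_inner G G \<le> real q
    \<and> trace_norm W + trace_norm (P_perp * D * Q_perp) + frob_inner D G \<le> trace_norm (W + D)"
proof -
  define R where "R = P_perp * D * Q_perp"
  have R: "R \<in> carrier_mat m n" unfolding R_def using D by simp
  obtain CW where CW: "CW \<in> carrier_mat m n" "contraction m n CW"
    "frob_inner W CW = trace_norm W" using trace_norm_attained[OF W] by blast
  obtain CR where CR: "CR \<in> carrier_mat m n" "contraction m n CR"
    "frob_inner R CR = trace_norm R" using trace_norm_attained[OF R] by blast
  define G where "G = P * CW * Q"
  define H where "H = P_perp * CR * Q_perp"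
  have G: "G \<in> carrier_mat m n" and H: "H \<in> carrier_mat m n"
    unfolding G_def H_def using CW CR by simp_all
  have "frob_inner W G = frob_inner (P * CW) (W * transpose_mat Q)"
    unfolding G_def frob_inner_commute[OF W G[unfolded G_def]]
    using CW(1) W by (intro frob_inner_mult_right[of _ m n]) auto
  also have "\<dots> = frob_inner CW (transpose_mat P * W)"
    using CW(1) W by (simp add: WQ frob_inner_mult_left[of P m m CW n W])
  finally have WG: "frob_inner W G = trace_norm W"
    using CW by (simp add: PW frob_inner_commute[OF CW(1) W])
  have "frob_inner W H = frob_inner (P_perp * CR) (W * transpose_mat Q_perp)"
    unfolding H_def frob_inner_commute[OF W H[unfolded H_def]]
    using CR(1) W by (intro frob_inner_mult_right[of _ m n]) auto
  also have "W * transpose_mat Q_perp = W * 1\<^sub>m n - W * Q"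
    by (simp add: mult_minus_distrib_mat[OF W one_carrier_mat proj_mat_carrier])
  also have "\<dots> = 0\<^sub>m m n" using W unfolding WQ by (intro eq_matI) auto
  finally have WH: "frob_inner W H = 0" using CR(1) by (simp add: frob_inner_def proj_mat_def)
  have "frob_inner D H = frob_inner (P_perp * CR) (D * transpose_mat Q_perp)"
    unfolding H_def frob_inner_commute[OF D H[unfolded H_def]]
    using CR(1) D by (intro frob_inner_mult_right[of _ m n]) auto
  also have "\<dots> = frob_inner CR (transpose_mat P_perp * (D * transpose_mat Q_perp))"
    using CR(1) D by (intro frob_inner_mult_left[of _ m m]) auto
  also have "transpose_mat P_perp * (D * transpose_mat Q_perp) = R"
    unfolding R_def using D by (simp add: assoc_mult_mat[of P_perp m m D n Q_perp n])
  finally have DH: "frob_inner D H = trace_norm R"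
    using CR by (simp add: frob_inner_commute[OF CR(1) R])
  have "frob_inner (W + D) (G + H) \<le> trace_norm (W + D) * 1"
    using W D G H contraction_block_sum[OF CW(1,2) CR(1,2)] unfolding G_def H_def
    by (intro frob_inner_le_trace_norm) auto
  moreover have "frob_inner (W + D) (G + H) = frob_inner W G + frob_inner W H + frob_inner D G + frob_inner D H"
    using W D G H by (simp add: frob_inner_add_left[OF W D] frob_inner_add_right[of _ m n])
  moreover have "frob_inner G G \<le> real q"
    unfolding G_def using CW(1)
    by (intro frob_mult_proj_right_le[of "P * CW" m n, OF _ orth_right] mult_contraction[OF carrier_projections(1) CW(1)
        contraction_projections(1) CW(2)]) auto
  ultimately show ?thesis using G WG WH DH unfolding R_def by auto
qed

lemma trace_norm_le_split:
  assumes D: "D \<in> carrier_mat m n"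
  shows "trace_norm D \<le> trace_norm (P_perp * D * Q_perp) + trace_norm (P * D) + trace_norm (P_perp * D * Q)"
proof -
  define X where "X = P_perp * D"
  have X_carrier: "X \<in> carrier_mat m n" unfolding X_def using D by simp
  have X: "X = D - P * D" unfolding X_def using D minus_mult_distrib_mat[of "1\<^sub>m m" m m P D n] by simp
  have XQ: "X * Q_perp = X - X * Q"
    using X_carrier mult_minus_distrib_mat[OF X_carrier one_carrier_mat proj_mat_carrier] by simp
  have "D = X * Q_perp + P * D + X * Q"
  proof (rule eq_matI)
    fix i j assume "i < dim_row (X * Q_perp + P * D + X * Q)" "j < dim_col (X * Q_perp + P * D + X * Q)"
    then have ij: "i < m" "j < n" using X_carrier proj_mat_carrier[of n q b] by auto
    have "(X * Q_perp + P * D + X * Q) $$ (i, j) = (X * Q_perp) $$ (i, j) + (P * D) $$ (i, j) + (X * Q) $$ (i, j)"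
      using ij X_carrier D by (simp del: index_mult_mat(1))
    also have "(X * Q_perp) $$ (i, j) = X $$ (i, j) - (X * Q) $$ (i, j)"
      unfolding XQ using ij X_carrier by (simp del: index_mult_mat(1))
    also have "X $$ (i, j) = D $$ (i, j) - (P * D) $$ (i, j)"
      unfolding X using ij D by (simp del: index_mult_mat(1))
    finally show "D $$ (i, j) = (X * Q_perp + P * D + X * Q) $$ (i, j)" by simp
  qed (use X_carrier D proj_mat_carrier[of n q b] in auto)
  then have "trace_norm D \<le> trace_norm (X * Q_perp + P * D) + trace_norm (X * Q)"
    using D X_carrier by (metis trace_norm_triangle add_carrier_mat carrier_mult_projections)
  also have "\<dots> \<le> trace_norm (X * Q_perp) + trace_norm (P * D) + trace_norm (X * Q)"
    using D X_carrier trace_norm_triangle[of "X * Q_perp" m n "P * D"] by simp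
  finally show ?thesis unfolding X_def .
qed

lemma trace_norm_proj_mult_le:
  assumes D: "D \<in> carrier_mat m n" and t: "0 < t"
  shows "trace_norm (P * D) \<le> (t * frob_inner D D + real p / t) / 2"
proof -
  obtain C where C: "C \<in> carrier_mat m n" "contraction m n C"
    "frob_inner (P * D) C = trace_norm (P * D)" using trace_norm_attained[of "P * D" m n] D by fastforce
  have "trace_norm (P * D) = frob_inner D (P * C)"
    using C frob_inner_mult_left[of P m m D n C] D by simp
  also have "\<dots> \<le> (t * frob_inner D D + frob_inner (P * C) (P * C) / t) / 2"
    using frob_inner_amgm[OF t D, of "P * C"] C by simp
  also have "\<dots> \<le> (t * frob_inner D D + real p / t) / 2"
    using frob_proj_mult_left_le[OF C(1) orth_left C(2)] t by (simp add: divide_right_mono)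
  finally show ?thesis .
qed

lemma trace_norm_compl_mult_proj_le:
  assumes D: "D \<in> carrier_mat m n" and t: "0 < t"
  shows "trace_norm (P_perp * D * Q) \<le> (t * frob_inner D D + real q / t) / 2"
proof -
  obtain C where C: "C \<in> carrier_mat m n" "contraction m n C"
    "frob_inner (P_perp * D * Q) C = trace_norm (P_perp * D * Q)"
    using trace_norm_attained[of "P_perp * D * Q" m n] D by fastforce
  have "trace_norm (P_perp * D * Q) = frob_inner (P_perp * D) (C * Q)"
    using C D frob_inner_mult_right[of "P_perp * D" m n Q n C] by simp
  also have "\<dots> = frob_inner D (P_perp * (C * Q))"
    using C D frob_inner_mult_left[of P_perp m m D n "C * Q"] by simp
  also have "\<dots> = frob_inner D (P_perp * C * Q)"
    using C by (simp add: assoc_mult_mat[of P_perp m m C n Q n])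
  also have "\<dots> \<le> (t * frob_inner D D + frob_inner (P_perp * C * Q) (P_perp * C * Q) / t) / 2"
    using frob_inner_amgm[OF t D, of "P_perp * C * Q"] C by simp
  also have "\<dots> \<le> (t * frob_inner D D + real q / t) / 2"
    using C(1) t
    by (intro add_left_mono divide_right_mono frob_mult_proj_right_le[of "P_perp * C" m n, OF _ orth_right]
        mult_contraction[OF carrier_projections(3) C(1) contraction_projections(2) C(2)]) auto
  finally show ?thesis .
qed

end

lemma trace_norm_decomposability:
  assumes W: "W \<in> carrier_mat m n" and D: "D \<in> carrier_mat m n" and t: "0 < t"
  shows "trace_norm D + trace_norm W - trace_norm (W + D) \<le> 3 * (t * frob_inner D D + real (mrank W) / t) / 2"
proof -
  obtain p a q b where pq: "p \<le> mrank W" "q \<le> mrank W" "orthonormal m p a" "orthonormal n q b"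
    and fixes_W: "proj_mat m p a * W = W" "W * proj_mat n q b = W"
    using rank_projections_exist[OF W] by blast
  interpret orthonormal_pair m n p q a b using pq by unfold_locales
  define B where "B = (t * frob_inner D D + real (mrank W) / t) / 2"
  have rank_bound: "(t * frob_inner D D + real k / t) / 2 \<le> B" if "k \<le> mrank W" for k
    unfolding B_def using that t by (simp add: divide_right_mono)
  obtain G where G: "G \<in> carrier_mat m n" "frob_inner G G \<le> real q"
    "trace_norm W + trace_norm (P_perp * D * Q_perp) + frob_inner D G \<le> trace_norm (W + D)"
    using trace_norm_add_ge[OF W D fixes_W] by blast
  have "- frob_inner D G \<le> (t * frob_inner D D + frob_inner G G / t) / 2"
    using frob_inner_amgm[OF t D G(1)] by linarith
  also have "\<dots> \<le> (t * frob_inner D D + real q / t) / 2"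
    using G(2) t by (simp add: divide_right_mono)
  also have "\<dots> \<le> B" by (rule rank_bound[OF pq(2)])
  finally have "- frob_inner D G \<le> B" .
  moreover have "3 * (t * frob_inner D D + real (mrank W) / t) / 2 = 3 * B" unfolding B_def by simp
  ultimately show ?thesis
    using G(3) trace_norm_le_split[OF D] trace_norm_proj_mult_le[OF D t] trace_norm_compl_mult_proj_le[OF D t]
      rank_bound[OF pq(1)] rank_bound[OF pq(2)] by linarith
qed

section \<open>Unfoldings of tensors\<close>

definition radix_weight :: "(nat \<Rightarrow> nat) \<Rightarrow> nat \<Rightarrow> nat" where
  "radix_weight b m = (\<Prod>l<m. b l)"

lemma radix_weight_Suc: "radix_weight b (Suc m) = radix_weight b m * b m" unfolding radix_weight_def by simp

lemma radix_weight_pos: "(\<forall>l<m. 0 < b l) \<Longrightarrow> 0 < radix_weight b m" unfolding radix_weight_def by (auto intro: prod_pos)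

lemma radix_weight_dvd: "m \<le> L \<Longrightarrow> radix_weight b m dvd radix_weight b L"
  unfolding radix_weight_def by (rule prod_dvd_prod_subset) auto

lemma mixed_radix_digits_sum: "(\<Sum>m<L. ((j div radix_weight b m) mod b m) * radix_weight b m) = j mod radix_weight b L"
proof (induction L)
  case 0
  then show ?case by (simp add: radix_weight_def)
next
  case (Suc L)
  have "j mod radix_weight b (Suc L) = radix_weight b L * (j div radix_weight b L mod b L) + j mod radix_weight b L"
    unfolding radix_weight_Suc by (rule mod_mult2_eq)
  then show ?case using Suc by (simp add: ac_simps)
qed

lemma mixed_radix_digits:
  assumes pos: "\<forall>l<L. 0 < b l" and d: "\<forall>m<L. d m < b m"
  shows "(\<Sum>m<L. d m * radix_weight b m) < radix_weight b L \<and> (\<forall>m'<L. ((\<Sum>m<L. d m * radix_weight b m) div radix_weight b m') mod b m' = d m')"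
  using assms
proof (induction L)
  case 0
  then show ?case by (simp add: radix_weight_def)
next
  case (Suc L)
  define J where "J = (\<Sum>m<L. d m * radix_weight b m)"
  from Suc have IH: "J < radix_weight b L" "\<forall>m'<L. (J div radix_weight b m') mod b m' = d m'" unfolding J_def by auto
  have S: "(\<Sum>m<Suc L. d m * radix_weight b m) = J + d L * radix_weight b L" unfolding J_def by simp
  have bL: "0 < b L" "d L < b L" using Suc.prems by auto
  have plp: "0 < radix_weight b m'" if "m' \<le> Suc L" for m' using radix_weight_pos[of m' b] Suc.prems that by auto
  have bound: "J + d L * radix_weight b L < radix_weight b (Suc L)"
  proof -
    have "J + d L * radix_weight b L < radix_weight b L + d L * radix_weight b L" using IH(1) by simp
    also have "\<dots> = (d L + 1) * radix_weight b L" by simp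
    also have "\<dots> \<le> b L * radix_weight b L" using bL by (intro mult_right_mono) auto
    finally show ?thesis unfolding radix_weight_Suc by (simp add: mult.commute)
  qed
  have digits: "((J + d L * radix_weight b L) div radix_weight b m') mod b m' = d m'" if m': "m' < Suc L" for m'
  proof (cases "m' = L")
    case True
    have "(J + d L * radix_weight b L) div radix_weight b L = d L + J div radix_weight b L"
      using plp[of L] by simp
    also have "J div radix_weight b L = 0" using IH(1) by simp
    finally show ?thesis using True bL by simp
  next
    case False
    then have m'L: "m' < L" using m' by simp
    obtain c where c: "radix_weight b L = radix_weight b (Suc m') * c" using radix_weight_dvd[of "Suc m'" L b] m'L by (auto elim: dvdE)
    have e: "d L * radix_weight b L = (d L * c * b m') * radix_weight b m'" unfolding c radix_weight_Suc by (simp add: ac_simps)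
    have "(J + d L * radix_weight b L) div radix_weight b m' = (J + (d L * c * b m') * radix_weight b m') div radix_weight b m'" unfolding e ..
    also have "\<dots> = d L * c * b m' + J div radix_weight b m'"
      by (rule div_mult_self1) (use plp[of m'] m'L in simp)
    finally have "(J + d L * radix_weight b L) div radix_weight b m' = d L * c * b m' + J div radix_weight b m'" .
    then have "((J + d L * radix_weight b L) div radix_weight b m') mod b m' = (J div radix_weight b m') mod b m'"
      by (simp add: mod_add_left_eq[symmetric])
    also have "\<dots> = d m'" using IH(2) m'L by simp
    finally show ?thesis .
  qed
  show ?case unfolding S using bound digits by blast
qed

definition skip_mode :: "(nat \<Rightarrow> nat) \<Rightarrow> nat \<Rightarrow> nat \<Rightarrow> nat" where
  "skip_mode n k l = (if l = k then 1 else n l)"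

lemma prod_other_modes: "(\<Prod>l\<in>{l. l < m \<and> l \<noteq> k}. n l) = radix_weight (skip_mode n k) m"
proof -
  have "radix_weight (skip_mode n k) m = (\<Prod>l\<in>{l. l < m \<and> l \<noteq> k}. skip_mode n k l)"
    unfolding radix_weight_def by (rule prod.mono_neutral_right) (auto simp: skip_mode_def)
  also have "\<dots> = (\<Prod>l\<in>{l. l < m \<and> l \<noteq> k}. n l)" by (rule prod.cong) (auto simp: skip_mode_def)
  finally show ?thesis by simp
qed

definition fold_idx :: "nat \<Rightarrow> (nat \<Rightarrow> nat) \<Rightarrow> nat \<Rightarrow> (nat \<Rightarrow> nat) \<Rightarrow> nat" where
  "fold_idx K n k i = (\<Sum>m<K. (if m = k then 0 else i m) * radix_weight (skip_mode n k) m)"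

lemma unfold_idx_other_mode:
  "m < K \<Longrightarrow> m \<noteq> k \<Longrightarrow> unfold_idx K n k r j m = (j div radix_weight (skip_mode n k) m) mod n m"
  unfolding unfold_idx_def prod_other_modes by simp

lemma unfold_idx_mode: "unfold_idx K n k r j k = r"
  unfolding unfold_idx_def by simp

lemma unfold_idx_fold_idx:
  assumes k: "k < K" and pos: "\<forall>l<K. 0 < n l" and i: "i \<in> tensor_idx K n"
  shows "unfold_idx K n k (i k) (fold_idx K n k i) = i \<and> fold_idx K n k i < radix_weight (skip_mode n k) K"
proof -
  let ?b = "skip_mode n k"
  define d where "d m = (if m = k then 0 else i m)" for m
  have "\<forall>l<K. 0 < ?b l" "\<forall>m<K. d m < ?b m"
    using pos i unfolding d_def skip_mode_def tensor_idx_def by auto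
  note digits = mixed_radix_digits[OF this, folded fold_idx_def[of K n k i, folded d_def]]
  have "unfold_idx K n k (i k) (fold_idx K n k i) m = i m" for m
  proof (cases "m = k \<or> K \<le> m")
    case True
    then show ?thesis using i unfolding unfold_idx_def tensor_idx_def by auto
  next
    case False
    then have "unfold_idx K n k (i k) (fold_idx K n k i) m = (fold_idx K n k i div radix_weight ?b m) mod ?b m"
      using unfold_idx_other_mode by (simp add: skip_mode_def)
    then show ?thesis using digits False unfolding d_def by auto
  qed
  then show ?thesis using digits by auto
qed

lemma fold_idx_unfold_idx:
  assumes k: "k < K" and pos: "\<forall>l<K. 0 < n l" and r: "r < n k" and j: "j < radix_weight (skip_mode n k) K"
  shows "unfold_idx K n k r j \<in> tensor_idx K n \<and> fold_idx K n k (unfold_idx K n k r j) = j"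
proof
  show "unfold_idx K n k r j \<in> tensor_idx K n"
    unfolding tensor_idx_def using r k pos unfold_idx_other_mode[of _ K k n r j]
    by (auto simp: unfold_idx_def)
  have "fold_idx K n k (unfold_idx K n k r j)
      = (\<Sum>m<K. ((j div radix_weight (skip_mode n k) m) mod skip_mode n k m) * radix_weight (skip_mode n k) m)"
    unfolding fold_idx_def using unfold_idx_other_mode[of _ K k n r j] by (intro sum.cong) (auto simp: skip_mode_def)
  also have "\<dots> = j" using j by (simp add: mixed_radix_digits_sum)
  finally show "fold_idx K n k (unfold_idx K n k r j) = j" .
qed

lemma sum_tensor_idx_unfold:
  assumes k: "k < K" and pos: "\<forall>l<K. 0 < n l"
  shows "(\<Sum>i\<in>tensor_idx K n. F i) = (\<Sum>r<n k. \<Sum>j<radix_weight (skip_mode n k) K. F (unfold_idx K n k r j))"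
proof -
  have "(\<Sum>r<n k. \<Sum>j<radix_weight (skip_mode n k) K. F (unfold_idx K n k r j))
      = (\<Sum>(r, j)\<in>{..<n k} \<times> {..<radix_weight (skip_mode n k) K}. F (unfold_idx K n k r j))"
    by (rule sum.cartesian_product)
  also have "\<dots> = (\<Sum>i\<in>tensor_idx K n. F i)"
    using unfold_idx_fold_idx[OF k pos] fold_idx_unfold_idx[OF k pos]
    by (intro sum.reindex_bij_witness[where i = "\<lambda>i. (i k, fold_idx K n k i)" and j = "\<lambda>(r, j). unfold_idx K n k r j"])
      (use k in \<open>auto simp: tensor_idx_def unfold_idx_mode\<close>)
  finally show ?thesis by simp
qed

definition tensor_inner :: "nat \<Rightarrow> (nat \<Rightarrow> nat) \<Rightarrow> tensor \<Rightarrow> tensor \<Rightarrow> real" where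
  "tensor_inner K n T S = (\<Sum>i\<in>tensor_idx K n. T i * S i)"

lemma unfold_mode_carrier: "unfold_mode K n T k \<in> carrier_mat (n k) (radix_weight (skip_mode n k) K)"
  unfolding unfold_mode_def prod_other_modes by simp

lemma tensor_inner_unfold_mode:
  assumes k: "k < K" and pos: "\<forall>l<K. 0 < n l"
  shows "tensor_inner K n T S = frob_inner (unfold_mode K n T k) (unfold_mode K n S k)"
proof -
  have "tensor_inner K n T S = (\<Sum>r<n k. \<Sum>j<radix_weight (skip_mode n k) K. T (unfold_idx K n k r j) * S (unfold_idx K n k r j))"
    unfolding tensor_inner_def by (rule sum_tensor_idx_unfold[OF k pos])
  also have "\<dots> = frob_inner (unfold_mode K n T k) (unfold_mode K n S k)"
    unfolding frob_inner_def using unfold_mode_carrier[of K n T k] by (simp add: unfold_mode_def prod_other_modes)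
  finally show ?thesis .
qed

lemma frob_squared: "(frob K n T)\<^sup>2 = tensor_inner K n T T"
proof -
  have "0 \<le> (\<Sum>i\<in>tensor_idx K n. (T i)\<^sup>2)" by (intro sum_nonneg) auto
  then show ?thesis unfolding frob_def tensor_inner_def by (simp add: power2_eq_square)
qed

lemma unfold_mode_diff: "unfold_mode K n (\<lambda>i. T i - S i) k = unfold_mode K n T k - unfold_mode K n S k"
  unfolding unfold_mode_def by (intro eq_matI) auto

lemma spec_norm_diff_bound:
  assumes A: "A \<in> carrier_mat m n" and B: "B \<in> carrier_mat m n"
    and sA: "spec_norm A \<le> al" and sB: "spec_norm B \<le> al"
  shows "op_norm_le m n (A - B) (2 * al)"
proof
  fix x
  have bA: "sqnorm m (mat_app A x) \<le> al\<^sup>2 * sqnorm n x"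
  proof -
    have "sqnorm m (mat_app A x) \<le> (spec_norm A)\<^sup>2 * sqnorm n x" using spec_norm_bound[OF A] by auto
    also have "\<dots> \<le> al\<^sup>2 * sqnorm n x" using spec_norm_bound[OF A] sA
      by (intro mult_right_mono power_mono sqnorm_nonneg) auto
    finally show ?thesis .
  qed
  have bB: "sqnorm m (mat_app B x) \<le> al\<^sup>2 * sqnorm n x"
  proof -
    have "sqnorm m (mat_app B x) \<le> (spec_norm B)\<^sup>2 * sqnorm n x" using spec_norm_bound[OF B] by auto
    also have "\<dots> \<le> al\<^sup>2 * sqnorm n x" using spec_norm_bound[OF B] sB
      by (intro mult_right_mono power_mono sqnorm_nonneg) auto
    finally show ?thesis .
  qed
  have "sqnorm m (mat_app (A - B) x) = sqnorm m (\<lambda>t. mat_app A x t - mat_app B x t)"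
    by (rule vinner_cong) (simp_all add: mat_app_minus[OF A B])
  also have "\<dots> \<le> 2 * sqnorm m (mat_app A x) + 2 * sqnorm m (mat_app B x)"
  proof -
    have e: "(a - b) * (a - b) \<le> 2 * (a * a) + 2 * (b * b)" for a b :: real
    proof -
      have "0 \<le> (a + b) * (a + b)" by simp
      then show ?thesis by (simp add: algebra_simps)
    qed
    have "sqnorm m (\<lambda>t. mat_app A x t - mat_app B x t)
        \<le> (\<Sum>t<m. 2 * (mat_app A x t * mat_app A x t) + 2 * (mat_app B x t * mat_app B x t))"
      unfolding vinner_def by (rule sum_mono) (rule e)
    also have "\<dots> = 2 * sqnorm m (mat_app A x) + 2 * sqnorm m (mat_app B x)"
      unfolding vinner_def by (simp only: sum.distrib sum_distrib_left)
    finally show ?thesis .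
  qed
  also have "\<dots> \<le> 2 * (al\<^sup>2 * sqnorm n x) + 2 * (al\<^sup>2 * sqnorm n x)" using bA bB by (simp add: mult.commute)
  finally show "sqnorm m (mat_app (A - B) x) \<le> (2 * al)\<^sup>2 * sqnorm n x" by (simp add: power_mult_distrib ac_simps)
qed


section \<open>The error bound\<close>

lemma trace_norm_gap_le:
  assumes W: "W \<in> carrier_mat m n" and D: "D \<in> carrier_mat m n" and lam: "0 < lam"
  shows "lam * (trace_norm D + trace_norm W - trace_norm (W + D))
    \<le> frob_inner D D / 4 + 9 * lam\<^sup>2 * real (mrank W)"
proof -
  have "lam * (trace_norm D + trace_norm W - trace_norm (W + D))
      \<le> lam * (3 * (1 / (6 * lam) * frob_inner D D + real (mrank W) / (1 / (6 * lam))) / 2)"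
    using trace_norm_decomposability[OF W D, of "1 / (6 * lam)"] lam by (intro mult_left_mono) auto
  also have "\<dots> = frob_inner D D / 4 + 9 * lam\<^sup>2 * real (mrank W)"
    using lam by (simp add: field_simps power2_eq_square)
  finally show ?thesis .
qed

lemma tensor_inner_commute: "tensor_inner K n T S = tensor_inner K n S T"
  unfolding tensor_inner_def by (simp add: mult.commute)

lemma tensor_inner_diff_right:
  "tensor_inner K n T (\<lambda>i. S i - S' i) = tensor_inner K n T S - tensor_inner K n T S'"
  unfolding tensor_inner_def by (simp add: right_diff_distrib sum_subtractf)

lemma tensor_inner_sum_right:
  "tensor_inner K n T (\<lambda>i. \<Sum>k<L. S k i) = (\<Sum>k<L. tensor_inner K n T (S k))"
  unfolding tensor_inner_def by (simp add: sum_distrib_left) (rule sum.swap)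

lemma tensor_inner_le_trace_norm:
  assumes k: "k < K" and pos: "\<forall>l<K. 0 < n l" and s: "0 \<le> s"
    and S: "op_norm_le (n k) (radix_weight (skip_mode n k) K) (unfold_mode K n S k) s"
  shows "tensor_inner K n T S \<le> s * trace_norm (unfold_mode K n T k)"
proof -
  have "tensor_inner K n T S = frob_inner (unfold_mode K n T k) (unfold_mode K n S k)"
    by (rule tensor_inner_unfold_mode[OF k pos])
  also have "\<dots> \<le> trace_norm (unfold_mode K n T k) * s"
    by (rule frob_inner_le_trace_norm[OF unfold_mode_carrier unfold_mode_carrier s S])
  finally show ?thesis by (simp add: mult.commute)
qed

lemma tensor_inner_le_spec_norm:
  assumes "k < K" "\<forall>l<K. 0 < n l"
  shows "tensor_inner K n S T \<le> spec_norm (unfold_mode K n S k) * trace_norm (unfold_mode K n T k)"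
  using spec_norm_bound[OF unfold_mode_carrier]
  by (subst tensor_inner_commute) (intro tensor_inner_le_trace_norm[OF assms], auto)

lemma tensor_inner_diff_ge:
  assumes k: "k < K" and pos: "\<forall>l<K. 0 < n l"
    and A: "spec_norm (unfold_mode K n A k) \<le> al" and B: "spec_norm (unfold_mode K n B k) \<le> al"
  shows "- (2 * al) * trace_norm (unfold_mode K n T k) \<le> tensor_inner K n T (\<lambda>i. A i - B i)"
proof -
  have al: "0 \<le> al" using spec_norm_bound[OF unfold_mode_carrier, of K n A k] A by linarith
  have "tensor_inner K n T (\<lambda>i. B i - A i) \<le> 2 * al * trace_norm (unfold_mode K n T k)"
    using al spec_norm_diff_bound[OF unfold_mode_carrier unfold_mode_carrier B A]
    by (intro tensor_inner_le_trace_norm[OF k pos]) (auto simp: unfold_mode_diff)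
  then show ?thesis by (simp add: tensor_inner_diff_right)
qed

lemma sum_tensor_inner_self_le:
  assumes cross: "\<forall>k<K. \<forall>l<K. k \<noteq> l \<longrightarrow> - c * \<tau> k \<le> tensor_inner K n (D k) (D l)"
  shows "(\<Sum>k<K. tensor_inner K n (D k) (D k))
    \<le> tensor_inner K n (\<lambda>i. \<Sum>k<K. D k i) (\<lambda>i. \<Sum>k<K. D k i) + c * (real K - 1) * (\<Sum>k<K. \<tau> k)"
proof -
  have row: "tensor_inner K n (D k) (D k) - c * (real K - 1) * \<tau> k \<le> (\<Sum>l<K. tensor_inner K n (D k) (D l))"
    if k: "k < K" for k
  proof -
    have "(\<Sum>l<K. tensor_inner K n (D k) (D l))
        = tensor_inner K n (D k) (D k) + (\<Sum>l\<in>{..<K} - {k}. tensor_inner K n (D k) (D l))"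
      using k by (subst sum.remove[of _ k]) auto
    moreover have "(\<Sum>l\<in>{..<K} - {k}. - c * \<tau> k) \<le> (\<Sum>l\<in>{..<K} - {k}. tensor_inner K n (D k) (D l))"
      using cross k by (intro sum_mono) auto
    moreover have "(\<Sum>l\<in>{..<K} - {k}. - c * \<tau> k) = - c * \<tau> k * (real K - 1)"
      using k by (simp add: of_nat_diff)
    ultimately show ?thesis by (simp add: algebra_simps)
  qed
  have "(\<Sum>k<K. tensor_inner K n (D k) (D k)) - c * (real K - 1) * (\<Sum>k<K. \<tau> k)
      = (\<Sum>k<K. tensor_inner K n (D k) (D k) - c * (real K - 1) * \<tau> k)"
    by (simp add: sum_subtractf sum_distrib_left)
  also have "\<dots> \<le> (\<Sum>k<K. \<Sum>l<K. tensor_inner K n (D k) (D l))" by (intro sum_mono row) auto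
  also have "\<dots> = tensor_inner K n (\<lambda>i. \<Sum>k<K. D k i) (\<lambda>i. \<Sum>k<K. D k i)"
    by (simp add: tensor_inner_sum_right tensor_inner_commute[of K n "\<lambda>i. \<Sum>k<K. D k i"])
  finally show ?thesis by simp
qed

lemma lasso_basic_inequality:
  assumes Y: "\<forall>i. Y i = (\<Sum>k<K. Wstar k i) + E i"
    and opt: "1/2 * (frob K n (\<lambda>i. Y i - (\<Sum>k<K. What k i)))\<^sup>2
          + lam * (\<Sum>k<K. trace_norm (unfold_mode K n (What k) k))
        \<le> 1/2 * (frob K n (\<lambda>i. Y i - (\<Sum>k<K. Wstar k i)))\<^sup>2
          + lam * (\<Sum>k<K. trace_norm (unfold_mode K n (Wstar k) k))"
  defines "\<Delta> \<equiv> \<lambda>i. \<Sum>k<K. What k i - Wstar k i"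
  shows "1/2 * tensor_inner K n \<Delta> \<Delta> \<le> tensor_inner K n E \<Delta>
    + lam * (\<Sum>k<K. trace_norm (unfold_mode K n (Wstar k) k) - trace_norm (unfold_mode K n (What k) k))"
proof -
  have "(\<lambda>i. Y i - (\<Sum>k<K. What k i)) = (\<lambda>i. E i - \<Delta> i)" "(\<lambda>i. Y i - (\<Sum>k<K. Wstar k i)) = E"
    using Y unfolding \<Delta>_def by (auto simp: sum_subtractf)
  moreover have "tensor_inner K n (\<lambda>i. E i - \<Delta> i) (\<lambda>i. E i - \<Delta> i)
      = tensor_inner K n E E - 2 * tensor_inner K n E \<Delta> + tensor_inner K n \<Delta> \<Delta>"
    unfolding tensor_inner_def by (simp add: algebra_simps sum.distrib sum_subtractf sum_distrib_left)
  ultimately show ?thesis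
    using opt by (simp add: frob_squared sum_subtractf algebra_simps)
qed

lemma unfold_mode_add: "unfold_mode K n (\<lambda>i. T i + S i) k = unfold_mode K n T k + unfold_mode K n S k"
  unfolding unfold_mode_def by (intro eq_matI) auto

lemma lasso_key_inequality:
  fixes Wstar What :: "nat \<Rightarrow> tensor"
  assumes pos: "\<forall>k<K. 0 < n k" and Y: "\<forall>i. Y i = (\<Sum>k<K. Wstar k i) + E i"
    and Wstar: "\<forall>k<K. \<forall>l<K. k \<noteq> l \<longrightarrow> spec_norm (unfold_mode K n (Wstar l) k) \<le> al"
    and What: "\<forall>k<K. \<forall>l<K. l \<noteq> k \<longrightarrow> spec_norm (unfold_mode K n (What k) l) \<le> al"
    and opt: "1/2 * (frob K n (\<lambda>i. Y i - (\<Sum>k<K. What k i)))\<^sup>2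
          + lam * (\<Sum>k<K. trace_norm (unfold_mode K n (What k) k))
        \<le> 1/2 * (frob K n (\<lambda>i. Y i - (\<Sum>k<K. Wstar k i)))\<^sup>2
          + lam * (\<Sum>k<K. trace_norm (unfold_mode K n (Wstar k) k))"
    and lam_ge: "2 * Max ((\<lambda>k. spec_norm (unfold_mode K n E k)) ` {..<K}) + al * (real K - 1) \<le> lam"
  defines "D \<equiv> \<lambda>k i. What k i - Wstar k i"
  shows "1/2 * (\<Sum>k<K. tensor_inner K n (D k) (D k)) \<le> lam * (\<Sum>k<K. trace_norm (unfold_mode K n (D k) k)
    + trace_norm (unfold_mode K n (Wstar k) k) - trace_norm (unfold_mode K n (What k) k))"
proof -
  define \<tau> where "\<tau> k = trace_norm (unfold_mode K n (D k) k)" for k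
  define \<Delta> where "\<Delta> i = (\<Sum>k<K. D k i)" for i
  define mx where "mx = Max ((\<lambda>k. spec_norm (unfold_mode K n E k)) ` {..<K})"
  have mx: "spec_norm (unfold_mode K n E k) \<le> mx" if "k < K" for k
    unfolding mx_def using that by (intro Max_ge) auto
  have noise: "tensor_inner K n E \<Delta> \<le> mx * (\<Sum>k<K. \<tau> k)"
  proof -
    have "tensor_inner K n E (D k) \<le> mx * \<tau> k" if "k < K" for k
      using order_trans[OF tensor_inner_le_spec_norm[OF that pos]
          mult_right_mono[OF mx[OF that] trace_norm_nonneg[OF unfold_mode_carrier]]]
      unfolding \<tau>_def .
    then show ?thesis unfolding \<Delta>_def tensor_inner_sum_right sum_distrib_left by (intro sum_mono) auto
  qed
  have cross: "(\<Sum>k<K. tensor_inner K n (D k) (D k)) \<le> tensor_inner K n \<Delta> \<Delta> + 2 * al * (real K - 1) * (\<Sum>k<K. \<tau> k)"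
    unfolding \<Delta>_def
  proof (intro sum_tensor_inner_self_le allI impI)
    fix k l assume "k < K" "l < K" "k \<noteq> l"
    then show "- (2 * al) * \<tau> k \<le> tensor_inner K n (D k) (D l)"
      unfolding D_def \<tau>_def using Wstar What by (intro tensor_inner_diff_ge[OF _ pos]) auto
  qed
  have "mx * (\<Sum>k<K. \<tau> k) + al * (real K - 1) * (\<Sum>k<K. \<tau> k) \<le> lam * (\<Sum>k<K. \<tau> k)"
  proof (cases "K = 0")
    case False
    then have "0 \<le> mx" using mx[of 0] spec_norm_bound[OF unfold_mode_carrier, of K n E 0] by simp
    then have "mx + al * (real K - 1) \<le> lam" using lam_ge unfolding mx_def by linarith
    moreover have "0 \<le> (\<Sum>k<K. \<tau> k)" unfolding \<tau>_def by (intro sum_nonneg trace_norm_nonneg[OF unfold_mode_carrier])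
    ultimately show ?thesis using mult_right_mono by (metis distrib_right)
  qed simp
  moreover have "1/2 * tensor_inner K n \<Delta> \<Delta> \<le> tensor_inner K n E \<Delta>
      + lam * (\<Sum>k<K. trace_norm (unfold_mode K n (Wstar k) k) - trace_norm (unfold_mode K n (What k) k))"
    using lasso_basic_inequality[OF Y opt] unfolding \<Delta>_def D_def by (simp add: sum_subtractf)
  ultimately show ?thesis
    using noise cross unfolding \<tau>_def by (simp add: sum.distrib sum_subtractf algebra_simps)
qed

lemma lasso_error_bound:
  fixes Wstar What :: "nat \<Rightarrow> tensor"
  assumes pos: "\<forall>k<K. 0 < n k" and lam: "0 < lam" and Y: "\<forall>i. Y i = (\<Sum>k<K. Wstar k i) + E i"
    and Wstar: "\<forall>k<K. \<forall>l<K. k \<noteq> l \<longrightarrow> spec_norm (unfold_mode K n (Wstar l) k) \<le> al"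
    and What: "\<forall>k<K. \<forall>l<K. l \<noteq> k \<longrightarrow> spec_norm (unfold_mode K n (What k) l) \<le> al"
    and opt: "1/2 * (frob K n (\<lambda>i. Y i - (\<Sum>k<K. What k i)))\<^sup>2
          + lam * (\<Sum>k<K. trace_norm (unfold_mode K n (What k) k))
        \<le> 1/2 * (frob K n (\<lambda>i. Y i - (\<Sum>k<K. Wstar k i)))\<^sup>2
          + lam * (\<Sum>k<K. trace_norm (unfold_mode K n (Wstar k) k))"
    and lam_ge: "2 * Max ((\<lambda>k. spec_norm (unfold_mode K n E k)) ` {..<K}) + al * (real K - 1) \<le> lam"
  shows "(\<Sum>k<K. (frob K n (\<lambda>i. What k i - Wstar k i))\<^sup>2)
    \<le> 36 * lam\<^sup>2 * (\<Sum>k<K. real (mrank (unfold_mode K n (Wstar k) k)))"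
proof -
  define D where "D k = (\<lambda>i. What k i - Wstar k i)" for k
  define f where "f k = tensor_inner K n (D k) (D k)" for k
  define r where "r k = real (mrank (unfold_mode K n (Wstar k) k))" for k
  have "lam * (trace_norm (unfold_mode K n (D k) k) + trace_norm (unfold_mode K n (Wstar k) k)
      - trace_norm (unfold_mode K n (What k) k)) \<le> f k / 4 + 9 * lam\<^sup>2 * r k" if k: "k < K" for k
  proof -
    have "unfold_mode K n (Wstar k) k + unfold_mode K n (D k) k = unfold_mode K n (What k) k"
      unfolding D_def unfold_mode_add[symmetric] by simp
    then show ?thesis
      using trace_norm_gap_le[OF unfold_mode_carrier[of K n "Wstar k" k] unfold_mode_carrier[of K n "D k" k] lam]
      unfolding f_def r_def tensor_inner_unfold_mode[OF k pos] by (simp add: algebra_simps)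
  qed
  then have "1/2 * (\<Sum>k<K. f k) \<le> (\<Sum>k<K. f k / 4 + 9 * lam\<^sup>2 * r k)"
    using lasso_key_inequality[OF pos Y Wstar What opt lam_ge] unfolding sum_distrib_left D_def f_def
    by (meson order_trans sum_mono lessThan_iff)
  also have "\<dots> = (\<Sum>k<K. f k) / 4 + 9 * lam\<^sup>2 * (\<Sum>k<K. r k)"
    by (simp add: sum.distrib sum_distrib_left sum_divide_distrib)
  finally have "(\<Sum>k<K. f k) \<le> 36 * lam\<^sup>2 * (\<Sum>k<K. r k)" by linarith
  then show ?thesis by (simp add: frob_squared f_def D_def r_def)
qed

theorem theorem2:
  "\<exists>c::real. \<forall>(K::nat) (n::nat \<Rightarrow> nat) (\<alpha>::real) (lam::real) (Y::tensor) (E::tensor)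
      (Wstar::nat \<Rightarrow> tensor) (What::nat \<Rightarrow> tensor).
    (\<forall>k<K. 0 < n k) \<longrightarrow> 0 \<le> \<alpha> \<longrightarrow> 0 < lam \<longrightarrow>
    (\<forall>i. Y i = (\<Sum>k<K. Wstar k i) + E i) \<longrightarrow>
    (\<forall>k<K. \<forall>l<K. k \<noteq> l \<longrightarrow> spec_norm (unfold_mode K n (Wstar l) k) \<le> \<alpha>) \<longrightarrow>
    (\<forall>k<K. \<forall>l<K. l \<noteq> k \<longrightarrow> spec_norm (unfold_mode K n (What k) l) \<le> \<alpha>) \<longrightarrow>
    (\<forall>V::nat \<Rightarrow> tensor.
        (\<forall>k<K. \<forall>l<K. l \<noteq> k \<longrightarrow> spec_norm (unfold_mode K n (V k) l) \<le> \<alpha>) \<longrightarrow>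
        1/2 * (frob K n (\<lambda>i. Y i - (\<Sum>k<K. What k i)))\<^sup>2
          + lam * (\<Sum>k<K. trace_norm (unfold_mode K n (What k) k))
        \<le> 1/2 * (frob K n (\<lambda>i. Y i - (\<Sum>k<K. V k i)))\<^sup>2
          + lam * (\<Sum>k<K. trace_norm (unfold_mode K n (V k) k))) \<longrightarrow>
    lam \<ge> 2 * Max ((\<lambda>k. spec_norm (unfold_mode K n E k)) ` {..<K}) + \<alpha> * (real K - 1) \<longrightarrow>
    (\<Sum>k<K. (frob K n (\<lambda>i. What k i - Wstar k i))\<^sup>2)
      \<le> c * lam\<^sup>2 * (\<Sum>k<K. real (mrank (unfold_mode K n (Wstar k) k)))"
proof (intro exI[of _ 36] allI impI, goal_cases)
  case (1 K n \<alpha> lam Y E Wstar What)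
  have "\<forall>k<K. \<forall>l<K. l \<noteq> k \<longrightarrow> spec_norm (unfold_mode K n (Wstar k) l) \<le> \<alpha>"
    using 1(5) by auto
  with 1(7) show ?case by (intro lasso_error_bound[OF 1(1,3,4,5,6) _ 1(8)]) blast
qed

end
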